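(* Let $h,k\in L^1(0,1)$ be equal a.e. on $[0,\delta]$ for some $\delta\in(0,1)$, and suppose there are real constants $c,\mu,\nu,r$ with $c>0$, $r>-1$ such that $ct^re^{\mu t}\le h(t)\le ct^re^{\nu t}$ for $t\in[0,1]$. Then for every $p\in[1,\infty]$, $V_k^n\sim V_h^n$ on $L^p(0,1)$ as $n\to\infty$, i.e. $\|V_k^n-V_h^n\|_p/\|V_h^n\|_p\to0$.
   Context: For $k\in L^1(0,1)$, $V_k$ is the Volterra convolution operator on $L^p(0,1)$, $(V_ku)(t)=\int_0^tk(t-s)u(s)\,ds$; $\|\cdot\|_p$ is the operator norm on $L^p(0,1)$. For operator sequences, $A_n\sim B_n$ means $\|A_n-B_n\|/\|A_n\|\to0$. (The paper writes the hypothesis as $r>1$, evidently intending $r>-1$.) *)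

theory Defs
  imports "HOL-Analysis.Analysis" "HOL-Probability.Essential_Supremum"
begin

definition Lp_norm :: "ereal \<Rightarrow> (real \<Rightarrow> real) \<Rightarrow> real" where
  "Lp_norm p u =
     (if p = \<infinity> then real_of_ereal (esssup (lebesgue_on {0..1}) (\<lambda>x. ereal \<bar>u x\<bar>))
      else (enn2real (\<integral>\<^sup>+ x. ennreal (\<bar>u x\<bar> powr real_of_ereal p) \<partial>lebesgue_on {0..1}))
             powr (1 / real_of_ereal p))"

definition in_Lp :: "ereal \<Rightarrow> (real \<Rightarrow> real) \<Rightarrow> bool" where
  "in_Lp p u \<longleftrightarrow> u \<in> borel_measurable (lebesgue_on {0..1}) \<and>
     (if p = \<infinity> then esssup (lebesgue_on {0..1}) (\<lambda>x. ereal \<bar>u x\<bar>) < \<infinity>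
      else (\<integral>\<^sup>+ x. ennreal (\<bar>u x\<bar> powr real_of_ereal p) \<partial>lebesgue_on {0..1}) < \<infinity>)"

definition Volterra :: "(real \<Rightarrow> real) \<Rightarrow> (real \<Rightarrow> real) \<Rightarrow> (real \<Rightarrow> real)" where
  "Volterra k u = (\<lambda>t. LINT s:{0..t}|lebesgue. k (t - s) * u s)"

definition op_norm :: "ereal \<Rightarrow> ((real \<Rightarrow> real) \<Rightarrow> (real \<Rightarrow> real)) \<Rightarrow> real" where
  "op_norm p T = Sup ((\<lambda>u. Lp_norm p (T u)) ` {u. in_Lp p u \<and> Lp_norm p u \<le> 1})"

end

theory Submission
  imports Defs "HOL-Real_Asymp.Real_Asymp"
begin

text \<open>
  Replace \<open>h\<close> and \<open>k\<close> by Borel kernels \<open>hb\<close> and \<open>kb\<close> supported in (0, 1] and compare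
  the operators through convolutions of nonnegative functions on the real line. With H = hb and
  G = |kb - hb|, which vanishes on [0, \<delta>], the difference |V_k^n u - V_h^n u| is majorized by the
  terms of the binomial expansion of (H + G)^(*n) * |u| that contain a factor G. A term with j
  factors G vanishes on [0, 1] once j \<delta> > 1, and in the remaining terms the power H^(*(n - j)) is
  only evaluated on [0, 1 - \<delta>]. As H^(*m) is comparable to c^m A(m - 1) t^(m q - 1), with q = r + 1
  and A(m) a product of Beta values, these terms are O(n^j c^(n - j) A(n - j - 1) (1 - \<delta>)^((n - j) q))
  on the unit ball of L^1, which contains that of L^p, whereas testing V_h^n on the constant 1 gives
  the lower bound const c^n A(n - 1) / n^2 for its norm. Finally A(n - 1) / A(n - j - 1) is at least
  (\<theta>^(n q) \<kappa>)^j for every \<theta> < 1, and the choice \<theta>^(2 j) = 1 - \<delta> leaves a factor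
  (1 - \<delta>)^(n q / 2), which beats every power of n.
\<close>

section \<open>Integrals of powers and the Beta function\<close>

lemma nn_integral_Beta:
  assumes "a > -1" "b > -1"
  shows "(\<integral>\<^sup>+x. ennreal (indicator {0..1} x * (x powr a * (1 - x) powr b)) \<partial>lborel)
    = ennreal (Beta (a + 1) (b + 1))"
proof -
  have "((\<lambda>t. t powr (a + 1 - 1) * (1 - t) powr (b + 1 - 1)) has_integral Beta (a + 1) (b + 1)) {0..1}"
    using assms by (intro has_integral_Beta_real) auto
  then show ?thesis
    by (subst nn_integral_has_integral_lebesgue) auto
qed

lemma nn_integral_powr_interval:
  fixes a T :: real
  assumes "a > -1" "0 \<le> T"
  shows "(\<integral>\<^sup>+x. ennreal (indicator {0..T} x * x powr a) \<partial>lborel) = ennreal (T powr (a + 1) / (a + 1))"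
proof -
  have "((\<lambda>x. x powr a) has_integral (T powr (a + 1) / (a + 1))) {0..T}"
    by (rule has_integral_powr_from_0) (use assms in auto)
  then show ?thesis
    by (subst nn_integral_has_integral_lebesgue) auto
qed

lemma nn_integral_reflect:
  fixes f :: "real \<Rightarrow> ennreal"
  assumes [measurable]: "f \<in> borel_measurable borel"
  shows "(\<integral>\<^sup>+s. f (t - s) \<partial>lborel) = (\<integral>\<^sup>+x. f x \<partial>lborel)"
  using nn_integral_real_affine[of f "-1" t] by simp

lemma nn_integral_shift:
  fixes f :: "real \<Rightarrow> ennreal"
  assumes [measurable]: "f \<in> borel_measurable borel"
  shows "(\<integral>\<^sup>+s. f (s - t) \<partial>lborel) = (\<integral>\<^sup>+x. f x \<partial>lborel)"
  using nn_integral_real_affine[of f 1 "- t"] by simp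

lemma nn_integral_reflect_powr:
  fixes a t :: real
  assumes "-1 < a" "0 \<le> t"
  shows "(\<integral>\<^sup>+s. ennreal (indicator {0..t} s * (t - s) powr a) \<partial>lborel) = ennreal (t powr (a + 1) / (a + 1))"
proof -
  have "(\<integral>\<^sup>+s. ennreal (indicator {0..t} s * (t - s) powr a) \<partial>lborel)
      = (\<integral>\<^sup>+s. ennreal (indicator {0..t} (t - s) * (t - s) powr a) \<partial>lborel)"
    by (intro nn_integral_cong) (auto simp: indicator_def)
  also have "\<dots> = (\<integral>\<^sup>+x. ennreal (indicator {0..t} x * x powr a) \<partial>lborel)"
    by (rule nn_integral_reflect[of "\<lambda>x. ennreal (indicator {0..t} x * x powr a)"]) measurable
  finally show ?thesis
    using nn_integral_powr_interval[OF assms] by simp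
qed

lemma Beta_real_pos:
  fixes a b :: real
  assumes "0 < a" "0 < b"
  shows "0 < Beta a b"
  using assms by (simp add: Beta_def Gamma_real_pos_exp[of a] Gamma_real_pos_exp[of b] Gamma_real_pos_exp[of "a + b"])

lemma nn_integral_Beta_scaled:
  assumes a: "a > -1" and b: "b > -1" and y: "0 < y"
  shows "(\<integral>\<^sup>+s. ennreal (indicator {0..y} s * ((y - s) powr b * s powr a)) \<partial>lborel)
    = ennreal (y powr (a + b + 1) * Beta (a + 1) (b + 1))"
proof -
  let ?F = "\<lambda>s. ennreal (indicator {0..y} s * ((y - s) powr b * s powr a))"
  have pt: "?F (y * x) = ennreal (y powr (a + b)) * ennreal (indicator {0..1} x * (x powr a * (1 - x) powr b))" for x
  proof (cases "x \<in> {0..1}")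
    case x: True
    have yx: "y - y * x = y * (1 - x)" by (simp add: algebra_simps)
    have "(y - y * x) powr b * (y * x) powr a = y powr (a + b) * (x powr a * (1 - x) powr b)"
      unfolding yx using x y by (simp add: powr_mult powr_add)
    moreover have "y * x \<in> {0..y}" using x y by (auto simp: mult_le_cancel_left1)
    ultimately show ?thesis using x y by (simp add: ennreal_mult'[symmetric] mult_ac)
  next
    case False
    then have "y * x \<notin> {0..y}" using y by (auto simp: zero_le_mult_iff mult_le_cancel_left1)
    then show ?thesis using False by simp
  qed
  have "(\<integral>\<^sup>+s. ?F s \<partial>lborel) = ennreal y * (\<integral>\<^sup>+x. ?F (y * x) \<partial>lborel)"
    using nn_integral_real_affine[of ?F y 0] y by simp
  also have "\<dots> = ennreal y * (\<integral>\<^sup>+x. ennreal (y powr (a + b)) *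
      ennreal (indicator {0..1} x * (x powr a * (1 - x) powr b)) \<partial>lborel)"
    by (simp only: pt)
  also have "\<dots> = ennreal y * (ennreal (y powr (a + b)) * ennreal (Beta (a + 1) (b + 1)))"
    by (subst nn_integral_cmult) (auto simp: nn_integral_Beta a b)
  also have "\<dots> = ennreal (y powr (a + b + 1) * Beta (a + 1) (b + 1))"
    using y Beta_real_pos[of "a + 1" "b + 1"] a b by (simp add: ennreal_mult[symmetric] powr_add mult_ac)
  finally show ?thesis .
qed

lemma Beta_lower_bound:
  fixes x q \<theta> :: real
  assumes x: "1 \<le> x" and \<theta>: "0 < \<theta>" "\<theta> < 1" and q: "0 < q"
  shows "\<theta> powr (x - 1) * ((1 - \<theta>) powr q / q) \<le> Beta x q"
proof -
  have "(\<integral>\<^sup>+s. ennreal (indicator {\<theta>..1} s * (1 - s) powr (q - 1)) \<partial>lborel)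
      = (\<integral>\<^sup>+y. ennreal (indicator {0..1-\<theta>} y * y powr (q - 1)) \<partial>lborel)"
    by (subst nn_integral_real_affine[where c = "-1" and t = 1])
      (auto intro!: nn_integral_cong simp: indicator_def)
  also have "\<dots> = ennreal ((1 - \<theta>) powr q / q)"
    using nn_integral_powr_interval[of "q - 1" "1 - \<theta>"] q \<theta> by simp
  finally have tail: "(\<integral>\<^sup>+s. ennreal (indicator {\<theta>..1} s * (1 - s) powr (q - 1)) \<partial>lborel)
      = ennreal ((1 - \<theta>) powr q / q)" .
  have "ennreal (\<theta> powr (x - 1) * ((1 - \<theta>) powr q / q))
      = ennreal (\<theta> powr (x - 1)) * (\<integral>\<^sup>+s. ennreal (indicator {\<theta>..1} s * (1 - s) powr (q - 1)) \<partial>lborel)"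
    unfolding tail using \<theta> q by (subst ennreal_mult[symmetric]) auto
  also have "\<dots> = (\<integral>\<^sup>+s. ennreal (\<theta> powr (x - 1) * (indicator {\<theta>..1} s * (1 - s) powr (q - 1))) \<partial>lborel)"
    by (subst nn_integral_cmult[symmetric]) (auto simp: ennreal_mult)
  also have "\<dots> \<le> (\<integral>\<^sup>+s. ennreal (indicator {0..1} s * (s powr (x - 1) * (1 - s) powr (q - 1))) \<partial>lborel)"
  proof (intro nn_integral_mono ennreal_leI)
    fix s
    show "\<theta> powr (x - 1) * (indicator {\<theta>..1} s * (1 - s) powr (q - 1))
        \<le> indicator {0..1} s * (s powr (x - 1) * (1 - s) powr (q - 1))"
    proof (cases "s \<in> {\<theta>..1}")
      case True
      have "\<theta> powr (x - 1) \<le> s powr (x - 1)" using True \<theta> x by (intro powr_mono2) auto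
      then show ?thesis using True \<theta> by (auto intro!: mult_right_mono)
    qed (auto simp: indicator_def)
  qed
  also have "\<dots> = ennreal (Beta x q)"
    using nn_integral_Beta[of "x - 1" "q - 1"] x q by simp
  finally show ?thesis
    using Beta_real_pos[of x q] x q by (simp add: ennreal_le_iff)
qed

text \<open>\<open>powr_conv_coeff q i = Gamma q ^ (i + 1) / Gamma ((i + 1) * q)\<close>: the \<open>(i + 1)\<close>-fold
  convolution power of \<open>t powr (q - 1)\<close> is \<open>powr_conv_coeff q i * t powr ((i + 1) * q - 1)\<close>.\<close>
primrec powr_conv_coeff :: "real \<Rightarrow> nat \<Rightarrow> real" where
  "powr_conv_coeff q 0 = 1"
| "powr_conv_coeff q (Suc i) = powr_conv_coeff q i * Beta (real (Suc i) * q) q"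

lemma powr_conv_coeff_pos: "q > 0 \<Longrightarrow> powr_conv_coeff q i > 0"
  by (induction i) (auto intro!: Beta_real_pos mult_pos_pos)

lemma powr_conv_coeff_growth:
  assumes q: "0 < q" and \<theta>: "0 < \<theta>" "\<theta> < 1"
    and m: "1 \<le> real (Suc m) * q" and N: "m + d < N"
  shows "powr_conv_coeff q m * (\<theta> powr (real N * q) * ((1 - \<theta>) powr q / q)) ^ d \<le> powr_conv_coeff q (m + d)"
  using N
proof (induction d)
  case 0
  then show ?case by simp
next
  case (Suc d)
  define \<beta> where "\<beta> = \<theta> powr (real N * q) * ((1 - \<theta>) powr q / q)"
  let ?l = "Suc (m + d)"
  have l: "1 \<le> real ?l * q"
    using m q by (smt (verit) le_add1 mult_right_mono of_nat_le_iff Suc_le_mono)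
  have "\<beta> \<le> \<theta> powr (real ?l * q - 1) * ((1 - \<theta>) powr q / q)"
  proof -
    have "real ?l * q \<le> real N * q" using Suc.prems q by (intro mult_right_mono) auto
    then have "\<theta> powr (real N * q) \<le> \<theta> powr (real ?l * q - 1)"
      using \<theta> by (intro powr_mono') auto
    then show ?thesis unfolding \<beta>_def using \<theta> q by (intro mult_right_mono) auto
  qed
  also have "\<dots> \<le> Beta (real ?l * q) q" by (rule Beta_lower_bound) (use l \<theta> q in auto)
  finally have "\<beta> \<le> Beta (real ?l * q) q" .
  moreover have "powr_conv_coeff q m * \<beta> ^ d \<le> powr_conv_coeff q (m + d)"
    using Suc by (simp add: \<beta>_def)
  moreover have "0 \<le> \<beta>" using \<theta> q by (simp add: \<beta>_def)
  ultimately have "powr_conv_coeff q m * \<beta> ^ d * \<beta> \<le> powr_conv_coeff q (m + d) * Beta (real ?l * q) q"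
    using powr_conv_coeff_pos[OF q, of m] powr_conv_coeff_pos[OF q, of "m + d"]
    by (intro mult_mono) auto
  then show ?case by (simp add: \<beta>_def mult_ac)
qed

section \<open>Convolution of nonnegative functions on the real line\<close>

definition nn_conv :: "(real \<Rightarrow> ennreal) \<Rightarrow> (real \<Rightarrow> ennreal) \<Rightarrow> real \<Rightarrow> ennreal" where
  "nn_conv f g t = (\<integral>\<^sup>+s. f (t - s) * g s \<partial>lborel)"

lemma measurable_nn_conv [measurable]:
  assumes [measurable]: "f \<in> borel_measurable borel" "g \<in> borel_measurable borel"
  shows "nn_conv f g \<in> borel_measurable borel"
  unfolding nn_conv_def[abs_def] by measurable

lemma nn_conv_commute:
  assumes [measurable]: "f \<in> borel_measurable borel" "g \<in> borel_measurable borel"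
  shows "nn_conv f g = nn_conv g f"
proof
  fix t
  show "nn_conv f g t = nn_conv g f t"
    unfolding nn_conv_def using nn_integral_real_affine[of "\<lambda>s. f (t - s) * g s" "-1" t]
    by (simp add: mult.commute)
qed

lemma nn_conv_assoc:
  assumes [measurable]: "f \<in> borel_measurable borel" "g \<in> borel_measurable borel"
    "w \<in> borel_measurable borel"
  shows "nn_conv f (nn_conv g w) = nn_conv (nn_conv f g) w"
proof
  fix t
  have "nn_conv f (nn_conv g w) t = (\<integral>\<^sup>+s. \<integral>\<^sup>+\<sigma>. f (t - s) * (g (s - \<sigma>) * w \<sigma>) \<partial>lborel \<partial>lborel)"
    unfolding nn_conv_def by (intro nn_integral_cong) (simp add: nn_integral_cmult)
  also have "\<dots> = (\<integral>\<^sup>+\<sigma>. \<integral>\<^sup>+s. f (t - s) * (g (s - \<sigma>) * w \<sigma>) \<partial>lborel \<partial>lborel)"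
    by (rule lborel_pair.Fubini'[symmetric]) measurable
  also have "\<dots> = (\<integral>\<^sup>+\<sigma>. (\<integral>\<^sup>+s. f (t - s) * g (s - \<sigma>) \<partial>lborel) * w \<sigma> \<partial>lborel)"
    by (intro nn_integral_cong, subst nn_integral_multc[symmetric]) (auto simp: mult.assoc)
  also have "\<dots> = (\<integral>\<^sup>+\<sigma>. nn_conv f g (t - \<sigma>) * w \<sigma> \<partial>lborel)"
  proof (intro nn_integral_cong)
    fix \<sigma> :: real
    have "(\<integral>\<^sup>+s. f (t - s) * g (s - \<sigma>) \<partial>lborel) = (\<integral>\<^sup>+s. f (t - \<sigma> - s) * g s \<partial>lborel)"
      using nn_integral_shift[of "\<lambda>s. f (t - \<sigma> - s) * g s" \<sigma>] by (simp add: algebra_simps)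
    then show "(\<integral>\<^sup>+s. f (t - s) * g (s - \<sigma>) \<partial>lborel) * w \<sigma> = nn_conv f g (t - \<sigma>) * w \<sigma>"
      by (simp add: nn_conv_def)
  qed
  finally show "nn_conv f (nn_conv g w) t = nn_conv (nn_conv f g) w t"
    unfolding nn_conv_def .
qed

lemma nn_integral_nn_conv:
  assumes [measurable]: "f \<in> borel_measurable borel" "g \<in> borel_measurable borel"
  shows "(\<integral>\<^sup>+t. nn_conv f g t \<partial>lborel) = (\<integral>\<^sup>+x. f x \<partial>lborel) * (\<integral>\<^sup>+x. g x \<partial>lborel)"
proof -
  have "(\<integral>\<^sup>+t. nn_conv f g t \<partial>lborel) = (\<integral>\<^sup>+s. \<integral>\<^sup>+t. f (t - s) * g s \<partial>lborel \<partial>lborel)"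
    unfolding nn_conv_def by (rule lborel_pair.Fubini'[symmetric]) measurable
  also have "\<dots> = (\<integral>\<^sup>+s. (\<integral>\<^sup>+x. f x \<partial>lborel) * g s \<partial>lborel)"
    by (intro nn_integral_cong) (simp add: nn_integral_multc nn_integral_shift)
  finally show ?thesis by (simp add: nn_integral_cmult)
qed

lemma nn_conv_mono:
  assumes "\<And>x. f x \<le> f' x" "\<And>x. g x \<le> g' x"
  shows "nn_conv f g t \<le> nn_conv f' g' t"
  unfolding nn_conv_def by (intro nn_integral_mono mult_mono) (auto simp: assms)

lemma nn_conv_mono_AE:
  assumes "\<And>x. f x \<le> f' x" "AE x in lborel. g x \<le> g' x"
  shows "nn_conv f g t \<le> nn_conv f' g' t"
  unfolding nn_conv_def using assms(2)
  by (intro nn_integral_mono_AE) (auto elim!: eventually_mono intro: mult_mono assms(1))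

lemma nn_conv_cong_right:
  assumes "\<And>s. f (t - s) \<noteq> 0 \<Longrightarrow> g s = g' s"
  shows "nn_conv f g t = nn_conv f g' t"
  unfolding nn_conv_def by (intro nn_integral_cong) (metis assms mult_zero_left)

lemma nn_conv_cmult:
  assumes [measurable]: "f \<in> borel_measurable borel" "g \<in> borel_measurable borel"
  shows "nn_conv (\<lambda>x. a * f x) (\<lambda>x. b * g x) t = a * b * nn_conv f g t"
  unfolding nn_conv_def by (subst nn_integral_cmult[symmetric]) (auto simp: mult_ac)

lemma nn_conv_add_left:
  assumes [measurable]: "f \<in> borel_measurable borel" "g \<in> borel_measurable borel" "w \<in> borel_measurable borel"
  shows "nn_conv (\<lambda>x. f x + g x) w t = nn_conv f w t + nn_conv g w t"
  unfolding nn_conv_def by (simp add: distrib_right nn_integral_add)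

lemma nn_conv_sum_right:
  assumes [measurable]: "f \<in> borel_measurable borel" "\<And>j. j \<in> J \<Longrightarrow> v j \<in> borel_measurable borel"
  shows "nn_conv f (\<lambda>s. \<Sum>j\<in>J. a j * v j s) t = (\<Sum>j\<in>J. a j * nn_conv f (v j) t)"
proof -
  have "nn_conv f (\<lambda>s. \<Sum>j\<in>J. a j * v j s) t = (\<integral>\<^sup>+s. (\<Sum>j\<in>J. a j * (f (t - s) * v j s)) \<partial>lborel)"
    unfolding nn_conv_def by (intro nn_integral_cong) (simp add: sum_distrib_left mult_ac)
  also have "\<dots> = (\<Sum>j\<in>J. (\<integral>\<^sup>+s. a j * (f (t - s) * v j s) \<partial>lborel))"
    by (rule nn_integral_sum) (use assms in measurable)
  also have "\<dots> = (\<Sum>j\<in>J. a j * nn_conv f (v j) t)"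
    unfolding nn_conv_def by (intro sum.cong refl nn_integral_cmult) (use assms in measurable)
  finally show ?thesis .
qed

lemma nn_conv_le_left:
  assumes [measurable]: "f \<in> borel_measurable borel"
    and "\<And>s. f (t - s) \<noteq> 0 \<Longrightarrow> g s \<le> B"
  shows "nn_conv f g t \<le> (\<integral>\<^sup>+x. f x \<partial>lborel) * B"
proof -
  have "nn_conv f g t \<le> (\<integral>\<^sup>+s. f (t - s) * B \<partial>lborel)"
    unfolding nn_conv_def using assms(2) by (intro nn_integral_mono) (metis mult_left_mono mult_zero_left order_refl zero_le)
  also have "\<dots> = (\<integral>\<^sup>+x. f x \<partial>lborel) * B"
    by (simp add: nn_integral_multc nn_integral_reflect)
  finally show ?thesis .
qed

lemma nn_conv_le_right:
  assumes [measurable]: "g \<in> borel_measurable borel"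
    and "\<And>s. g s \<noteq> 0 \<Longrightarrow> f (t - s) \<le> B"
  shows "nn_conv f g t \<le> B * (\<integral>\<^sup>+x. g x \<partial>lborel)"
proof -
  have "nn_conv f g t \<le> (\<integral>\<^sup>+s. B * g s \<partial>lborel)"
    unfolding nn_conv_def using assms(2) by (intro nn_integral_mono) (metis mult_right_mono mult_zero_right order_refl zero_le)
  then show ?thesis by (simp add: nn_integral_cmult)
qed

lemma nn_conv_eq_0:
  assumes "\<And>s. f (t - s) * g s = 0"
  shows "nn_conv f g t = 0"
  unfolding nn_conv_def assms by simp

text \<open>\<open>nn_conv_pow F n\<close> is the \<open>(n + 1)\<close>-fold convolution power of \<open>F\<close>, which needs no unit.\<close>
primrec nn_conv_pow :: "(real \<Rightarrow> ennreal) \<Rightarrow> nat \<Rightarrow> real \<Rightarrow> ennreal" where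
  "nn_conv_pow F 0 = F"
| "nn_conv_pow F (Suc n) = nn_conv F (nn_conv_pow F n)"

lemma measurable_nn_conv_pow [measurable]:
  "F \<in> borel_measurable borel \<Longrightarrow> nn_conv_pow F n \<in> borel_measurable borel"
  by (induction n) auto

lemma measurable_funpow_nn_conv [measurable]:
  "F \<in> borel_measurable borel \<Longrightarrow> w \<in> borel_measurable borel \<Longrightarrow> (nn_conv F ^^ n) w \<in> borel_measurable borel"
  by (induction n) auto

lemma funpow_nn_conv_Suc:
  assumes [measurable]: "F \<in> borel_measurable borel" "w \<in> borel_measurable borel"
  shows "(nn_conv F ^^ Suc n) w = nn_conv (nn_conv_pow F n) w"
  by (induction n) (simp_all add: nn_conv_assoc)

lemma nn_integral_funpow_nn_conv:
  assumes [measurable]: "F \<in> borel_measurable borel" "w \<in> borel_measurable borel"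
  shows "(\<integral>\<^sup>+t. (nn_conv F ^^ n) w t \<partial>lborel) = (\<integral>\<^sup>+x. F x \<partial>lborel) ^ n * (\<integral>\<^sup>+x. w x \<partial>lborel)"
  by (induction n) (auto simp: nn_integral_nn_conv mult_ac)

lemma AE_funpow_nn_conv_finite:
  assumes [measurable]: "F \<in> borel_measurable borel" "w \<in> borel_measurable borel"
    and "(\<integral>\<^sup>+x. F x \<partial>lborel) < \<infinity>" "(\<integral>\<^sup>+x. w x \<partial>lborel) < \<infinity>"
  shows "AE t in lborel. (nn_conv F ^^ n) w t < \<infinity>"
proof -
  have "AE t in lborel. (nn_conv F ^^ n) w t \<noteq> \<infinity>"
  proof (rule nn_integral_PInf_AE)
    show "(\<integral>\<^sup>+t. (nn_conv F ^^ n) w t \<partial>lborel) \<noteq> \<infinity>"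
      using assms(3,4)
      by (simp add: nn_integral_funpow_nn_conv ennreal_mult_eq_top_iff power_eq_top_ennreal top.not_eq_extremum)
  qed measurable
  then show ?thesis by (simp add: top.not_eq_extremum)
qed

lemma nn_conv_funpow_nn_conv:
  assumes [measurable]: "F \<in> borel_measurable borel" "K \<in> borel_measurable borel" "w \<in> borel_measurable borel"
  shows "nn_conv F ((nn_conv K ^^ j) w) = (nn_conv K ^^ j) (nn_conv F w)"
  using assms(3)
proof (induction j arbitrary: w)
  case 0
  then show ?case by simp
next
  case (Suc j)
  note [measurable] = Suc.prems
  have "nn_conv F ((nn_conv K ^^ Suc j) w) = nn_conv K (nn_conv F ((nn_conv K ^^ j) w))"
    by (simp add: nn_conv_assoc nn_conv_commute[of F K])
  then show ?case by (simp add: Suc.IH funpow_swap1)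
qed

definition exp_powr_kernel :: "real \<Rightarrow> real \<Rightarrow> real \<Rightarrow> ennreal" where
  "exp_powr_kernel l a y = ennreal (if 0 < y then exp (l * y) * y powr a else 0)"

lemma measurable_exp_powr_kernel [measurable]: "exp_powr_kernel l a \<in> borel_measurable borel"
  unfolding exp_powr_kernel_def[abs_def] by measurable

lemma exp_powr_kernel_le:
  assumes "0 \<le> l" "0 \<le> a" "y \<le> T" "T \<le> 1"
  shows "exp_powr_kernel l a y \<le> ennreal (exp l * T powr a)"
proof (cases "0 < y")
  case True
  have "exp (l * y) * y powr a \<le> exp l * T powr a"
    using True assms by (intro mult_mono powr_mono2) (auto intro!: mult_left_le)
  then show ?thesis using True by (simp add: exp_powr_kernel_def ennreal_leI)
qed (simp add: exp_powr_kernel_def)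

lemma nn_conv_exp_powr_kernel:
  assumes a: "a > -1" and b: "b > -1"
  shows "nn_conv (exp_powr_kernel l b) (exp_powr_kernel l a) y
    = ennreal (Beta (a + 1) (b + 1)) * exp_powr_kernel l (a + b + 1) y"
proof (cases "y > 0")
  case False
  then show ?thesis by (subst nn_conv_eq_0) (auto simp: exp_powr_kernel_def)
next
  case True
  have "nn_conv (exp_powr_kernel l b) (exp_powr_kernel l a) y
      = (\<integral>\<^sup>+s. ennreal (exp (l * y)) * ennreal (indicator {0..y} s * ((y - s) powr b * s powr a)) \<partial>lborel)"
    unfolding nn_conv_def
  proof (intro nn_integral_cong)
    fix s :: real
    show "exp_powr_kernel l b (y - s) * exp_powr_kernel l a s
        = ennreal (exp (l * y)) * ennreal (indicator {0..y} s * ((y - s) powr b * s powr a))"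
      unfolding exp_powr_kernel_def
      by (cases "0 < s"; cases "s < y")
        (auto simp: indicator_def ennreal_mult'[symmetric] exp_add[symmetric] algebra_simps)
  qed
  also have "\<dots> = ennreal (exp (l * y)) * ennreal (y powr (a + b + 1) * Beta (a + 1) (b + 1))"
    using True by (simp add: nn_integral_cmult nn_integral_Beta_scaled a b)
  also have "\<dots> = ennreal (Beta (a + 1) (b + 1)) * exp_powr_kernel l (a + b + 1) y"
    using True Beta_real_pos[of "a + 1" "b + 1"] a b
    by (simp add: exp_powr_kernel_def ennreal_mult[symmetric] mult_ac)
  finally show ?thesis .
qed

section \<open>Norms on \<open>L\<^sup>p(0, 1)\<close>\<close>

abbreviation L01 :: "real measure" where
  "L01 \<equiv> lebesgue_on {0..1}"

lemma nn_integral_L01: "(\<integral>\<^sup>+x. f x \<partial>L01) = (\<integral>\<^sup>+x. f x * indicator {0..1} x \<partial>lborel)"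
  by (simp add: nn_integral_restrict_space nn_integral_completion)

lemma space_L01 [simp]: "space L01 = {0..1}"
  by (simp add: space_restrict_space)

lemma emeasure_space_L01: "emeasure L01 (space L01) = 1"
  by (simp add: emeasure_restrict_space emeasure_completion)

lemma AE_L01_if_AE_lborel: "(AE x in lborel. P x) \<Longrightarrow> AE x in L01. P x"
  by (subst AE_restrict_space_iff) (auto intro: AE_completion elim: eventually_mono)

lemma measurable_L01_if_borel [measurable (raw)]:
  "f \<in> borel_measurable borel \<Longrightarrow> f \<in> borel_measurable L01"
  by (intro measurable_restrict_space1 measurable_completion) (simp add: measurable_lborel1)

lemma one_le_real_of_ereal:
  assumes "1 \<le> p" "p \<noteq> \<infinity>"
  shows "1 \<le> real_of_ereal p"
  using assms by (cases p) auto

lemma Lp_norm_cong: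
  assumes "\<And>t. t \<in> {0..1} \<Longrightarrow> F t = F' t"
  shows "Lp_norm p F = Lp_norm p F'"
proof -
  have meas: "(\<lambda>x. ereal \<bar>F x\<bar>) \<in> borel_measurable L01 \<longleftrightarrow> (\<lambda>x. ereal \<bar>F' x\<bar>) \<in> borel_measurable L01"
    by (intro measurable_cong) (simp add: assms)
  have "esssup L01 (\<lambda>x. ereal \<bar>F x\<bar>) = esssup L01 (\<lambda>x. ereal \<bar>F' x\<bar>)"
    using meas by (cases "(\<lambda>x. ereal \<bar>F x\<bar>) \<in> borel_measurable L01")
      (auto simp: assms esssup_non_measurable intro!: esssup_AE_cong AE_I2)
  moreover have "(\<integral>\<^sup>+x. ennreal (\<bar>F x\<bar> powr real_of_ereal p) \<partial>L01)
      = (\<integral>\<^sup>+x. ennreal (\<bar>F' x\<bar> powr real_of_ereal p) \<partial>L01)"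
    by (intro nn_integral_cong) (simp add: assms)
  ultimately show ?thesis
    unfolding Lp_norm_def by simp
qed

lemma Lp_norm_nonneg: "0 \<le> Lp_norm p F"
proof -
  have "0 \<le> esssup L01 (\<lambda>x. ereal \<bar>F x\<bar>)"
  proof (cases "(\<lambda>x. ereal \<bar>F x\<bar>) \<in> borel_measurable L01")
    case True
    have "esssup L01 (\<lambda>x. 0::ereal) \<le> esssup L01 (\<lambda>x. ereal \<bar>F x\<bar>)"
      by (intro esssup_mono) auto
    then show ?thesis
      using esssup_const[of L01 "0::ereal"] emeasure_space_L01 by simp
  qed (simp add: esssup_non_measurable)
  then show ?thesis
    unfolding Lp_norm_def by (auto intro: real_of_ereal_pos)
qed

lemma Lp_norm_le_const:
  assumes p: "1 \<le> p" and U: "0 \<le> U" and bound: "AE t in L01. \<bar>F t\<bar> \<le> U"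
  shows "Lp_norm p F \<le> U"
proof (cases "p = \<infinity>")
  case True
  show ?thesis
  proof (cases "(\<lambda>x. ereal \<bar>F x\<bar>) \<in> borel_measurable L01")
    case True
    have "esssup L01 (\<lambda>x. ereal \<bar>F x\<bar>) \<le> ereal U"
      by (rule esssup_I[OF True]) (use bound in \<open>auto elim: eventually_mono\<close>)
    then have "real_of_ereal (esssup L01 (\<lambda>x. ereal \<bar>F x\<bar>)) \<le> U"
      using U by (cases "esssup L01 (\<lambda>x. ereal \<bar>F x\<bar>)") auto
    then show ?thesis using \<open>p = \<infinity>\<close> by (simp add: Lp_norm_def)
  next
    case False
    then show ?thesis using \<open>p = \<infinity>\<close> U by (simp add: Lp_norm_def esssup_non_measurable top_ereal_def)
  qed
next
  case False
  define P where "P = real_of_ereal p"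
  have P: "1 \<le> P" using one_le_real_of_ereal[OF p False] by (simp add: P_def)
  have "(\<integral>\<^sup>+x. ennreal (\<bar>F x\<bar> powr P) \<partial>L01) \<le> (\<integral>\<^sup>+x. ennreal (U powr P) \<partial>L01)"
    using bound P by (intro nn_integral_mono_AE) (auto intro!: ennreal_leI powr_mono2 elim!: eventually_mono)
  also have "\<dots> = ennreal (U powr P)"
    using emeasure_space_L01 by simp
  finally have "enn2real (\<integral>\<^sup>+x. ennreal (\<bar>F x\<bar> powr P) \<partial>L01) powr (1 / P) \<le> (U powr P) powr (1 / P)"
    using P by (intro powr_mono2 enn2real_leI) auto
  also have "\<dots> = U" using P U by (simp add: powr_powr)
  finally show ?thesis using False by (simp add: Lp_norm_def P_def)
qed

lemma in_Lp_if_bounded: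
  assumes p: "1 \<le> p" and meas: "F \<in> borel_measurable L01"
    and bound: "\<And>t. t \<in> {0..1} \<Longrightarrow> \<bar>F t\<bar> \<le> B"
  shows "in_Lp p F"
proof (cases "p = \<infinity>")
  case True
  have "esssup L01 (\<lambda>x. ereal \<bar>F x\<bar>) \<le> ereal B"
    using meas bound by (intro esssup_I) (auto intro!: AE_I2)
  then show ?thesis using True meas by (auto simp: in_Lp_def)
next
  case False
  define P where "P = real_of_ereal p"
  have P: "1 \<le> P" using one_le_real_of_ereal[OF p False] by (simp add: P_def)
  have "(\<integral>\<^sup>+x. ennreal (\<bar>F x\<bar> powr P) \<partial>L01) \<le> (\<integral>\<^sup>+x. ennreal (B powr P) \<partial>L01)"
    using bound P by (intro nn_integral_mono) (auto intro!: ennreal_leI powr_mono2)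
  also have "\<dots> < \<infinity>" using emeasure_space_L01 by simp
  finally show ?thesis using False meas by (simp add: in_Lp_def P_def)
qed

text \<open>The case \<open>1 < P\<close> applies Young's inequality to \<open>\<bar>F\<bar> / N\<close> with \<open>N\<close> the \<open>L\<^sup>P\<close> norm.\<close>
lemma nn_integral_abs_le_powr_root:
  fixes F :: "'a \<Rightarrow> real" and P :: real
  assumes prob: "emeasure M (space M) = 1" and [measurable]: "F \<in> borel_measurable M"
    and P: "1 \<le> P" and fin: "(\<integral>\<^sup>+x. ennreal (\<bar>F x\<bar> powr P) \<partial>M) < \<infinity>"
  shows "(\<integral>\<^sup>+x. ennreal \<bar>F x\<bar> \<partial>M) \<le> ennreal (enn2real (\<integral>\<^sup>+x. ennreal (\<bar>F x\<bar> powr P) \<partial>M) powr (1 / P))"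
proof -
  define I where "I = (\<integral>\<^sup>+x. ennreal (\<bar>F x\<bar> powr P) \<partial>M)"
  define N where "N = enn2real I powr (1 / P)"
  consider "P = 1" | "1 < P" "I = 0" | "1 < P" "0 < N"
    using P fin by (cases "P = 1"; cases "I = 0") (auto simp: N_def I_def enn2real_eq_0_iff)
  then show ?thesis
  proof cases
    case 1
    then show ?thesis using fin by (simp add: less_top[symmetric])
  next
    case 2
    then have "AE x in M. ennreal \<bar>F x\<bar> = 0"
      unfolding I_def by (subst (asm) nn_integral_0_iff_AE) (auto elim!: eventually_mono)
    then have "(\<integral>\<^sup>+x. ennreal \<bar>F x\<bar> \<partial>M) = 0"
      by (subst nn_integral_0_iff_AE) auto
    then show ?thesis by simp
  next
    case 3
    define Q where "Q = P / (P - 1)"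
    have Q: "1 < Q" "1 / P + 1 / Q = 1" using 3 by (auto simp: Q_def field_simps)
    have I: "I = ennreal (N powr P)"
      using 3 fin by (simp add: N_def I_def powr_powr less_top[symmetric])
    have young: "\<bar>F x\<bar> \<le> N / P / N powr P * \<bar>F x\<bar> powr P + N / Q" for x
      using Youngs_inequality[OF \<open>1 < P\<close> Q, of "\<bar>F x\<bar> / N" 1] 3
      by (simp add: powr_divide field_simps)
    have "(\<integral>\<^sup>+x. ennreal \<bar>F x\<bar> \<partial>M)
        \<le> (\<integral>\<^sup>+x. ennreal (N / P / N powr P) * ennreal (\<bar>F x\<bar> powr P) + ennreal (N / Q) \<partial>M)"
      using 3 Q by (intro nn_integral_mono order.trans[OF ennreal_leI[OF young]])
        (simp add: ennreal_mult[symmetric] ennreal_plus[symmetric] del: ennreal_plus)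
    also have "\<dots> = ennreal (N / P / N powr P) * I + ennreal (N / Q)"
      using prob by (simp add: nn_integral_add nn_integral_cmult I_def)
    also have "\<dots> = ennreal N"
      using 3 Q unfolding I
      by (simp add: ennreal_mult[symmetric] ennreal_plus[symmetric] field_simps del: ennreal_plus)
    finally show ?thesis by (simp add: N_def I_def)
  qed
qed

lemma nn_integral_abs_le_Lp_norm:
  assumes p: "1 \<le> p" and F: "in_Lp p F"
  shows "(\<integral>\<^sup>+x. ennreal \<bar>F x\<bar> \<partial>L01) \<le> ennreal (Lp_norm p F)"
proof (cases "p = \<infinity>")
  case True
  define e where "e = esssup L01 (\<lambda>x. ereal \<bar>F x\<bar>)"
  have "e < \<infinity>" using F True by (simp add: in_Lp_def e_def)
  have "AE x in L01. ereal \<bar>F x\<bar> \<le> e" unfolding e_def by (rule esssup_AE)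
  then have "AE x in L01. ennreal \<bar>F x\<bar> \<le> ennreal (real_of_ereal e)"
    using \<open>e < \<infinity>\<close> by (elim eventually_mono) (cases e; auto intro: ennreal_leI)
  then have "(\<integral>\<^sup>+x. ennreal \<bar>F x\<bar> \<partial>L01) \<le> (\<integral>\<^sup>+x. ennreal (real_of_ereal e) \<partial>L01)"
    by (rule nn_integral_mono_AE)
  then show ?thesis
    using True emeasure_space_L01 by (simp add: Lp_norm_def e_def)
next
  case False
  have "F \<in> borel_measurable L01" using F by (simp add: in_Lp_def)
  then show ?thesis
    using nn_integral_abs_le_powr_root[OF emeasure_space_L01 _ one_le_real_of_ereal[OF p False]]
      F False by (simp add: in_Lp_def Lp_norm_def)
qed

lemma const_in_unit_ball:
  assumes "1 \<le> p" "0 \<le> a" "a \<le> 1"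
  shows "in_Lp p (\<lambda>_. a)" "Lp_norm p (\<lambda>_. a) \<le> 1"
  using assms by (auto intro!: in_Lp_if_bounded Lp_norm_le_const)

lemma op_norm_le:
  assumes p: "1 \<le> p" and B: "\<And>u. in_Lp p u \<Longrightarrow> Lp_norm p u \<le> 1 \<Longrightarrow> Lp_norm p (T u) \<le> B"
  shows "op_norm p T \<le> B"
  unfolding op_norm_def using const_in_unit_ball[OF p, of 0] B by (intro cSup_least) auto

lemma Lp_norm_le_op_norm:
  assumes B: "\<And>u. in_Lp p u \<Longrightarrow> Lp_norm p u \<le> 1 \<Longrightarrow> Lp_norm p (T u) \<le> B"
    and u: "in_Lp p u" "Lp_norm p u \<le> 1"
  shows "Lp_norm p (T u) \<le> op_norm p T"
  unfolding op_norm_def using B u by (intro cSup_upper bdd_aboveI2) auto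

section \<open>Volterra operators with Borel kernels\<close>

definition volterra01 :: "(real \<Rightarrow> real) \<Rightarrow> (real \<Rightarrow> real) \<Rightarrow> real \<Rightarrow> real" where
  "volterra01 f w t = indicator {0..1} t * (\<integral>s. f (t - s) * w s \<partial>lborel)"

lemma measurable_volterra01 [measurable]:
  assumes [measurable]: "f \<in> borel_measurable borel" "w \<in> borel_measurable borel"
  shows "volterra01 f w \<in> borel_measurable borel"
  unfolding volterra01_def[abs_def] by measurable

lemma measurable_funpow_volterra01 [measurable]:
  assumes [measurable]: "f \<in> borel_measurable borel" "w \<in> borel_measurable borel"
  shows "(volterra01 f ^^ n) w \<in> borel_measurable borel"
  by (induction n) auto

lemma volterra01_eq_0: "t \<notin> {0..1} \<Longrightarrow> volterra01 f w t = 0"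
  by (simp add: volterra01_def)

lemma abs_integral_le_nn_integral_abs:
  fixes F :: "'a \<Rightarrow> real"
  shows "ennreal \<bar>integral\<^sup>L M F\<bar> \<le> (\<integral>\<^sup>+x. ennreal \<bar>F x\<bar> \<partial>M)"
  using integral_norm_bound_ennreal[of M F] by (cases "integrable M F") (auto simp: not_integrable_integral_eq)

lemma abs_volterra01_le:
  "ennreal \<bar>volterra01 f w t\<bar> \<le> nn_conv (\<lambda>x. ennreal \<bar>f x\<bar>) (\<lambda>x. ennreal \<bar>w x\<bar>) t"
proof (cases "t \<in> {0..1}")
  case True
  then have "ennreal \<bar>volterra01 f w t\<bar> = ennreal \<bar>\<integral>s. f (t - s) * w s \<partial>lborel\<bar>"
    by (simp add: volterra01_def)
  also have "\<dots> \<le> nn_conv (\<lambda>x. ennreal \<bar>f x\<bar>) (\<lambda>x. ennreal \<bar>w x\<bar>) t"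
    using abs_integral_le_nn_integral_abs[of lborel "\<lambda>s. f (t - s) * w s"]
    by (simp add: nn_conv_def abs_mult ennreal_mult)
  finally show ?thesis .
qed (simp add: volterra01_eq_0)

lemma abs_funpow_volterra01_le:
  "ennreal \<bar>(volterra01 f ^^ n) u t\<bar> \<le> (nn_conv (\<lambda>x. ennreal \<bar>f x\<bar>) ^^ n) (\<lambda>x. ennreal \<bar>u x\<bar>) t"
proof (induction n arbitrary: t)
  case (Suc n)
  have "ennreal \<bar>(volterra01 f ^^ Suc n) u t\<bar>
      \<le> nn_conv (\<lambda>x. ennreal \<bar>f x\<bar>) (\<lambda>x. ennreal \<bar>(volterra01 f ^^ n) u x\<bar>) t"
    by (simp add: abs_volterra01_le)
  also have "\<dots> \<le> nn_conv (\<lambda>x. ennreal \<bar>f x\<bar>) ((nn_conv (\<lambda>x. ennreal \<bar>f x\<bar>) ^^ n) (\<lambda>x. ennreal \<bar>u x\<bar>)) t"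
    by (intro nn_conv_mono Suc.IH) simp
  finally show ?case by simp
qed simp

lemma volterra01_nonneg:
  "(\<And>x. 0 \<le> f x) \<Longrightarrow> (\<And>x. 0 \<le> w x) \<Longrightarrow> 0 \<le> volterra01 f w t"
  by (simp add: volterra01_def integral_nonneg)

lemma funpow_volterra01_nonneg:
  "(\<And>x. 0 \<le> f x) \<Longrightarrow> (\<And>x. 0 \<le> w x) \<Longrightarrow> 0 \<le> (volterra01 f ^^ n) w t"
  by (induction n arbitrary: t) (simp_all add: volterra01_nonneg)

lemma integrable_convolution_integrand:
  assumes [measurable]: "f \<in> borel_measurable borel" "g \<in> borel_measurable borel"
    and "nn_conv (\<lambda>x. ennreal \<bar>f x\<bar>) (\<lambda>x. ennreal \<bar>g x\<bar>) t < \<infinity>"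
  shows "integrable lborel (\<lambda>s. f (t - s) * g s)"
  by (rule integrableI_bounded) (use assms in \<open>simp_all add: nn_conv_def abs_mult ennreal_mult\<close>)

lemma ennreal_volterra01_eq_nn_conv:
  assumes [measurable]: "f \<in> borel_measurable borel" "w \<in> borel_measurable borel"
    and nonneg: "\<And>x. 0 \<le> f x" "\<And>x. 0 \<le> w x" and t: "t \<in> {0..1}"
    and fin: "nn_conv (\<lambda>x. ennreal (f x)) (\<lambda>x. ennreal (w x)) t < \<infinity>"
  shows "ennreal (volterra01 f w t) = nn_conv (\<lambda>x. ennreal (f x)) (\<lambda>x. ennreal (w x)) t"
proof -
  have "integrable lborel (\<lambda>s. f (t - s) * w s)"
    using fin nonneg by (intro integrable_convolution_integrand) simp_all
  then have "ennreal (\<integral>s. f (t - s) * w s \<partial>lborel) = (\<integral>\<^sup>+s. ennreal (f (t - s) * w s) \<partial>lborel)"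
    using nonneg by (intro nn_integral_eq_integral[symmetric]) auto
  then show ?thesis
    using t nonneg by (simp add: volterra01_def nn_conv_def ennreal_mult)
qed

lemma AE_lborel_reflect:
  fixes P :: "real \<Rightarrow> bool"
  assumes "AE x in lborel. P x"
  shows "AE s in lborel. P (t - s)"
proof -
  from assms obtain N where N: "{x \<in> space lborel. \<not> P x} \<subseteq> N" "emeasure lborel N = 0" "N \<in> sets lborel"
    by (rule AE_E)
  have "AE x in lborel. x \<notin> N" using N by (intro AE_not_in) auto
  then have "AE s in lborel. t + (-1) * s \<notin> N"
    by (intro AE_borel_affine) (use N in auto)
  then show ?thesis by eventually_elim (use N in auto)
qed

lemma Volterra_eq_volterra01:
  fixes F W f w :: "real \<Rightarrow> real"
  assumes [measurable]: "f \<in> borel_measurable borel" "w \<in> borel_measurable borel"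
    and f: "\<And>x. x \<notin> {0<..1} \<Longrightarrow> f x = 0" "AE x in lborel. x \<in> {0<..1} \<longrightarrow> F x = f x"
    and w: "\<And>x. x \<notin> {0..1} \<Longrightarrow> w x = 0" "AE x in lborel. x \<in> {0..1} \<longrightarrow> W x = w x"
    and t: "t \<in> {0..1}"
  shows "Volterra F W t = volterra01 f w t"
proof -
  have "AE s in lborel. indicator {0..t} s *\<^sub>R (F (t - s) * W s) = f (t - s) * w s"
    using AE_lborel_reflect[OF f(2), of t] w(2) AE_lborel_singleton[of t]
  proof eventually_elim
    case (elim s)
    show ?case
    proof (cases "s \<in> {0..t}")
      case True
      then have "s \<in> {0..1}" "t - s \<in> {0<..1}" using t elim(3) by auto
      then show ?thesis using elim True by simp
    next
      case False
      then have "s < 0 \<or> t - s < 0" by auto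
      then show ?thesis using False f(1) w(1) by auto
    qed
  qed
  then have ae: "AE s in lebesgue. f (t - s) * w s = indicator {0..t} s *\<^sub>R (F (t - s) * W s)"
    using AE_completion by (fastforce elim: eventually_mono)
  have meas: "(\<lambda>s. f (t - s) * w s) \<in> borel_measurable lebesgue"
    by (intro measurable_completion) measurable
  have "Volterra F W t = integral\<^sup>L lebesgue (\<lambda>s. indicator {0..t} s *\<^sub>R (F (t - s) * W s))"
    by (simp add: Volterra_def set_lebesgue_integral_def)
  also have "\<dots> = integral\<^sup>L lebesgue (\<lambda>s. f (t - s) * w s)"
    by (rule integral_cong_AE[OF borel_measurable_AE[OF meas ae] meas])
      (use ae in \<open>auto elim: eventually_mono\<close>)
  also have "\<dots> = (\<integral>s. f (t - s) * w s \<partial>lborel)"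
    by (rule integral_completion) measurable
  also have "\<dots> = volterra01 f w t"
    using t by (simp add: volterra01_def)
  finally show ?thesis .
qed

lemma funpow_Volterra_eq_volterra01:
  fixes F W f w :: "real \<Rightarrow> real"
  assumes [measurable]: "f \<in> borel_measurable borel" "w \<in> borel_measurable borel"
    and f: "\<And>x. x \<notin> {0<..1} \<Longrightarrow> f x = 0" "AE x in lborel. x \<in> {0<..1} \<longrightarrow> F x = f x"
    and w: "\<And>x. x \<notin> {0..1} \<Longrightarrow> w x = 0" "AE x in lborel. x \<in> {0..1} \<longrightarrow> W x = w x"
    and t: "t \<in> {0..1}"
  shows "(Volterra F ^^ Suc n) W t = (volterra01 f ^^ Suc n) w t"
  using t
proof (induction n arbitrary: t)
  case 0
  then show ?case using Volterra_eq_volterra01[OF assms(1-6)] by simp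
next
  case (Suc n)
  have "AE x in lborel. x \<in> {0..1} \<longrightarrow> (Volterra F ^^ Suc n) W x = (volterra01 f ^^ Suc n) w x"
    using Suc.IH by (intro AE_I2) auto
  then show ?case
    using Volterra_eq_volterra01[OF assms(1) _ f _ _ Suc.prems, of "(volterra01 f ^^ Suc n) w"]
    by (simp add: volterra01_eq_0)
qed

lemma obtain_borel_representative_01:
  fixes u :: "real \<Rightarrow> real"
  assumes "u \<in> borel_measurable L01"
  obtains ub where "ub \<in> borel_measurable borel" "\<And>x. x \<notin> {0..1} \<Longrightarrow> ub x = 0"
    "AE x in lborel. x \<in> {0..1} \<longrightarrow> u x = ub x"
proof -
  have "(\<lambda>x. indicator {0..1} x *\<^sub>R u x) \<in> borel_measurable lebesgue"
    using assms by (subst (asm) borel_measurable_restrict_space_iff) auto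
  then obtain u1 where u1: "u1 \<in> borel_measurable lborel"
    "AE x in lborel. indicator {0..1} x *\<^sub>R u x = u1 x"
    using completion_ex_borel_measurable_real by blast
  have [measurable]: "u1 \<in> borel_measurable borel" using u1(1) by (simp add: measurable_lborel1)
  show ?thesis
  proof
    show "(\<lambda>x. indicator {0..1} x * u1 x) \<in> borel_measurable borel" by measurable
    show "AE x in lborel. x \<in> {0..1} \<longrightarrow> u x = indicator {0..1} x * u1 x"
      using u1(2) by eventually_elim auto
  qed simp
qed

lemma obtain_borel_representative_unit_ball:
  fixes u :: "real \<Rightarrow> real"
  assumes p: "1 \<le> p" and u: "in_Lp p u" "Lp_norm p u \<le> 1"
  obtains ub where "ub \<in> borel_measurable borel" "\<And>x. x \<notin> {0..1} \<Longrightarrow> ub x = 0"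
    "AE x in lborel. x \<in> {0..1} \<longrightarrow> u x = ub x" "(\<integral>\<^sup>+x. ennreal \<bar>ub x\<bar> \<partial>lborel) \<le> 1"
proof -
  obtain ub where ub: "ub \<in> borel_measurable borel" "\<And>x. x \<notin> {0..1} \<Longrightarrow> ub x = 0"
    "AE x in lborel. x \<in> {0..1} \<longrightarrow> u x = ub x"
    using obtain_borel_representative_01 u(1) unfolding in_Lp_def by blast
  have "(\<integral>\<^sup>+x. ennreal \<bar>ub x\<bar> \<partial>lborel) = (\<integral>\<^sup>+x. ennreal \<bar>ub x\<bar> \<partial>L01)"
    by (auto simp: nn_integral_L01 ub(2) indicator_def intro!: nn_integral_cong)
  also have "\<dots> = (\<integral>\<^sup>+x. ennreal \<bar>u x\<bar> \<partial>L01)"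
    using AE_L01_if_AE_lborel[OF ub(3)] by (intro nn_integral_cong_AE) (auto elim: eventually_mono)
  also have "\<dots> \<le> ennreal (Lp_norm p u)"
    by (rule nn_integral_abs_le_Lp_norm[OF p u(1)])
  also have "\<dots> \<le> 1"
    using u(2) by simp
  finally show ?thesis using ub that by blast
qed

lemma nn_integral_abs_finite_if_integrable_L01:
  fixes F f :: "real \<Rightarrow> real"
  assumes F: "integrable L01 F"
    and f: "\<And>x. x \<notin> {0<..1} \<Longrightarrow> f x = 0" "AE x in lborel. x \<in> {0<..1} \<longrightarrow> F x = f x"
  shows "(\<integral>\<^sup>+x. ennreal \<bar>f x\<bar> \<partial>lborel) < \<infinity>"
proof -
  have "(\<integral>\<^sup>+x. ennreal \<bar>f x\<bar> \<partial>lborel) = (\<integral>\<^sup>+x. ennreal \<bar>F x\<bar> * indicator {0..1} x \<partial>lborel)"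
  proof (rule nn_integral_cong_AE)
    show "AE x in lborel. ennreal \<bar>f x\<bar> = ennreal \<bar>F x\<bar> * indicator {0..1} x"
      using f(2) AE_lborel_singleton[of 0]
    proof eventually_elim
      case (elim x)
      then show ?case by (cases "x \<in> {0<..1}") (auto simp: f(1) indicator_def)
    qed
  qed
  also have "\<dots> = (\<integral>\<^sup>+x. ennreal (norm (F x)) \<partial>L01)"
    by (simp add: nn_integral_L01)
  also have "\<dots> < \<infinity>"
    using F by (simp only: integrable_iff_bounded)
  finally show ?thesis .
qed

text \<open>Clipping between the two bounds keeps the representative a.e. equal to \<open>h\<close> but makes the
  bounds hold at every point of \<open>(0, 1]\<close>.\<close>
lemma obtain_clipped_borel_representative:
  fixes h L U :: "real \<Rightarrow> real"
  assumes h: "h \<in> borel_measurable L01"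
    and [measurable]: "L \<in> borel_measurable borel" "U \<in> borel_measurable borel"
    and LU: "\<And>t. t \<in> {0<..1} \<Longrightarrow> L t \<le> h t \<and> h t \<le> U t"
  obtains hb where "hb \<in> borel_measurable borel" "\<And>x. x \<notin> {0<..1} \<Longrightarrow> hb x = 0"
    "AE x in lborel. x \<in> {0<..1} \<longrightarrow> h x = hb x" "\<And>x. x \<in> {0<..1} \<Longrightarrow> L x \<le> hb x \<and> hb x \<le> U x"
proof -
  obtain h1 where [measurable]: "h1 \<in> borel_measurable borel"
    and h1: "AE x in lborel. x \<in> {0..1} \<longrightarrow> h x = h1 x"
    using obtain_borel_representative_01[OF h] by metis
  define hb where "hb x = (if x \<in> {0<..1} then min (max (h1 x) (L x)) (U x) else 0)" for x
  show ?thesis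
  proof
    show "hb \<in> borel_measurable borel"
      unfolding hb_def[abs_def] by measurable
    show "hb x = 0" if "x \<notin> {0<..1}" for x
      using that unfolding hb_def by auto
    show "AE x in lborel. x \<in> {0<..1} \<longrightarrow> h x = hb x"
      using h1
    proof eventually_elim
      case (elim x)
      show ?case
      proof
        assume x: "x \<in> {0<..1}"
        then have "h x = h1 x" using elim by auto
        then show "h x = hb x" using LU[OF x] x by (simp add: hb_def)
      qed
    qed
    show "L x \<le> hb x \<and> hb x \<le> U x" if "x \<in> {0<..1}" for x
      using that LU[OF that] by (auto simp: hb_def)
  qed
qed

lemma obtain_glued_borel_representative:
  fixes k hb :: "real \<Rightarrow> real"
  assumes k: "k \<in> borel_measurable L01" and [measurable]: "hb \<in> borel_measurable borel"
    and hb: "\<And>x. x \<notin> {0<..1} \<Longrightarrow> hb x = 0" and \<delta>: "0 \<le> \<delta>"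
    and k_hb: "AE x in lborel. x \<in> {0<..\<delta>} \<longrightarrow> k x = hb x"
  obtains kb where "kb \<in> borel_measurable borel" "\<And>x. x \<notin> {0<..1} \<Longrightarrow> kb x = 0"
    "\<And>x. x \<le> \<delta> \<Longrightarrow> kb x = hb x" "AE x in lborel. x \<in> {0<..1} \<longrightarrow> k x = kb x"
proof -
  obtain k1 where [measurable]: "k1 \<in> borel_measurable borel"
    and k1: "AE x in lborel. x \<in> {0..1} \<longrightarrow> k x = k1 x"
    using obtain_borel_representative_01[OF k] by metis
  define kb where "kb x = (if x \<in> {0<..\<delta>} then hb x else if x \<in> {\<delta><..1} then k1 x else 0)" for x
  show ?thesis
  proof
    show "kb \<in> borel_measurable borel"
      unfolding kb_def[abs_def] by measurable
    show "kb x = 0" if "x \<notin> {0<..1}" for x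
      using that hb[of x] \<delta> by (auto simp: kb_def)
    show "kb x = hb x" if "x \<le> \<delta>" for x
      using that hb[of x] by (simp add: kb_def)
    show "AE x in lborel. x \<in> {0<..1} \<longrightarrow> k x = kb x"
      using k_hb k1 by eventually_elim (auto simp: kb_def)
  qed
qed

section \<open>Convolution powers of the kernels\<close>

locale volterra_kernels =
  fixes hb kb :: "real \<Rightarrow> real" and c \<mu> \<nu> r \<delta> :: real
  assumes measurable_hb [measurable]: "hb \<in> borel_measurable borel"
    and measurable_kb [measurable]: "kb \<in> borel_measurable borel"
    and hb_outside: "\<And>x. x \<notin> {0<..1} \<Longrightarrow> hb x = 0"
    and kb_outside: "\<And>x. x \<notin> {0<..1} \<Longrightarrow> kb x = 0"
    and kb_eq_hb: "\<And>x. x \<le> \<delta> \<Longrightarrow> kb x = hb x"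
    and hb_lower: "\<And>x. x \<in> {0<..1} \<Longrightarrow> c * x powr r * exp (\<mu> * x) \<le> hb x"
    and hb_upper: "\<And>x. x \<in> {0<..1} \<Longrightarrow> hb x \<le> c * x powr r * exp (\<nu> * x)"
    and c_pos: "0 < c" and r_gt: "-1 < r" and \<delta>_pos: "0 < \<delta>" and \<delta>_lt_1: "\<delta> < 1"
    and hb_integrable: "(\<integral>\<^sup>+x. ennreal \<bar>hb x\<bar> \<partial>lborel) < \<infinity>"
    and kb_integrable: "(\<integral>\<^sup>+x. ennreal \<bar>kb x\<bar> \<partial>lborel) < \<infinity>"
begin

definition "H x = ennreal (hb x)"

definition "G x = ennreal \<bar>kb x - hb x\<bar>"

definition "K x = ennreal \<bar>kb x\<bar>"

definition "q = r + 1"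

definition "\<nu>' = max \<nu> 0"

definition "A = powr_conv_coeff q"

lemma measurable_H [measurable]: "H \<in> borel_measurable borel"
  unfolding H_def[abs_def] by measurable

lemma measurable_G [measurable]: "G \<in> borel_measurable borel"
  unfolding G_def[abs_def] by measurable

lemma measurable_K [measurable]: "K \<in> borel_measurable borel"
  unfolding K_def[abs_def] by measurable

lemma q_pos: "0 < q"
  using r_gt by (simp add: q_def)

lemma A_pos: "0 < A i"
  unfolding A_def using q_pos by (rule powr_conv_coeff_pos)

lemma hb_nonneg: "0 \<le> hb x"
proof (cases "x \<in> {0<..1}")
  case True
  have "0 \<le> c * x powr r * exp (\<mu> * x)" using c_pos by simp
  then show ?thesis using hb_lower[OF True] by linarith
qed (simp add: hb_outside)

lemma abs_hb_eq_H: "ennreal \<bar>hb x\<bar> = H x"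
  using hb_nonneg by (simp add: H_def)

lemma H_eq_0: "x \<le> 0 \<Longrightarrow> H x = 0"
  by (simp add: H_def hb_outside)

lemma G_eq_0: "x \<le> \<delta> \<Longrightarrow> G x = 0"
  by (simp add: G_def kb_eq_hb)

lemma K_le_H_plus_G: "K x \<le> H x + G x"
proof -
  have "\<bar>kb x\<bar> \<le> hb x + \<bar>kb x - hb x\<bar>"
    using abs_triangle_ineq[of "hb x" "kb x - hb x"] hb_nonneg[of x] by simp
  then show ?thesis
    using hb_nonneg by (simp add: K_def H_def G_def ennreal_plus[symmetric] ennreal_leI del: ennreal_plus)
qed

lemma H_le_kernel: "H y \<le> ennreal c * exp_powr_kernel \<nu>' r y"
proof (cases "y \<in> {0<..1}")
  case True
  have "hb y \<le> c * y powr r * exp (\<nu> * y)" by (rule hb_upper[OF True])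
  also have "\<dots> \<le> c * y powr r * exp (\<nu>' * y)"
    using True c_pos by (intro mult_left_mono) (auto simp: \<nu>'_def intro!: mult_right_mono)
  finally show ?thesis using True c_pos
    by (simp add: H_def exp_powr_kernel_def ennreal_mult'[symmetric] mult_ac)
qed (simp add: H_def hb_outside)

lemma kernel_le_H: "y \<le> 1 \<Longrightarrow> ennreal c * exp_powr_kernel \<mu> r y \<le> H y"
proof (cases "y \<in> {0<..1}")
  case True
  then show ?thesis using hb_lower[OF True] c_pos
    by (simp add: H_def exp_powr_kernel_def ennreal_mult'[symmetric] mult_ac ennreal_leI)
qed (auto simp: exp_powr_kernel_def)

lemma nn_conv_kernel_Suc:
  "nn_conv (\<lambda>x. ennreal c * exp_powr_kernel l r x)
      (\<lambda>x. ennreal (c ^ (i + 1) * A i) * exp_powr_kernel l (real (i + 1) * q - 1) x) y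
   = ennreal (c ^ (Suc i + 1) * A (Suc i)) * exp_powr_kernel l (real (Suc i + 1) * q - 1) y"
proof -
  have a: "real (i + 1) * q - 1 > -1" using q_pos by simp
  have e: "(real (i + 1) * q - 1) + 1 = real (Suc i) * q" "r + 1 = q"
    "(real (i + 1) * q - 1) + r + 1 = real (Suc i + 1) * q - 1"
    by (auto simp: q_def algebra_simps)
  have "0 \<le> c ^ (i + 1) * A i" "0 \<le> Beta (real (Suc i) * q) q"
    using A_pos[of i] c_pos q_pos by (auto intro!: less_imp_le Beta_real_pos)
  then have "ennreal (c ^ (Suc i + 1) * A (Suc i))
      = ennreal c * ennreal (c ^ (i + 1) * A i) * ennreal (Beta (real (Suc i) * q) q)"
    using c_pos by (simp add: A_def ennreal_mult[symmetric] mult_ac del: ennreal_mult)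
  then show ?thesis
    unfolding nn_conv_cmult[OF measurable_exp_powr_kernel measurable_exp_powr_kernel]
      nn_conv_exp_powr_kernel[OF a r_gt] e by (simp add: mult_ac)
qed

lemma nn_conv_pow_H_le:
  "nn_conv_pow H i y \<le> ennreal (c ^ (i + 1) * A i) * exp_powr_kernel \<nu>' (real (i + 1) * q - 1) y"
proof (induction i arbitrary: y)
  case 0
  then show ?case using H_le_kernel by (simp add: A_def q_def)
next
  case (Suc i)
  have "nn_conv_pow H (Suc i) y
      \<le> nn_conv (\<lambda>x. ennreal c * exp_powr_kernel \<nu>' r x)
          (\<lambda>x. ennreal (c ^ (i + 1) * A i) * exp_powr_kernel \<nu>' (real (i + 1) * q - 1) x) y"
    unfolding nn_conv_pow.simps by (intro nn_conv_mono H_le_kernel Suc.IH)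
  then show ?case by (simp only: nn_conv_kernel_Suc)
qed

lemma kernel_le_nn_conv_pow_H:
  "y \<le> 1 \<Longrightarrow> ennreal (c ^ (i + 1) * A i) * exp_powr_kernel \<mu> (real (i + 1) * q - 1) y \<le> nn_conv_pow H i y"
proof (induction i arbitrary: y)
  case 0
  then show ?case using kernel_le_H by (simp add: A_def q_def)
next
  case (Suc i)
  let ?a = "real (i + 1) * q - 1"
  have "nn_conv (\<lambda>x. ennreal c * exp_powr_kernel \<mu> r x)
      (\<lambda>x. ennreal (c ^ (i + 1) * A i) * exp_powr_kernel \<mu> ?a x) y \<le> nn_conv H (nn_conv_pow H i) y"
    unfolding nn_conv_def
  proof (intro nn_integral_mono)
    fix s
    show "ennreal c * exp_powr_kernel \<mu> r (y - s) * (ennreal (c ^ (i + 1) * A i) * exp_powr_kernel \<mu> ?a s)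
        \<le> H (y - s) * nn_conv_pow H i s"
    proof (cases "0 < s \<and> s < y")
      case True
      then show ?thesis using Suc.prems by (intro mult_mono kernel_le_H Suc.IH) auto
    qed (auto simp: exp_powr_kernel_def)
  qed
  then show ?case by (simp only: nn_conv_kernel_Suc nn_conv_pow.simps)
qed

definition "sup_bound T i = c ^ i * A (i - 1) * exp \<nu>' * T powr (real i * q - 1)"

lemma sup_bound_nonneg: "0 \<le> T \<Longrightarrow> 0 \<le> sup_bound T i"
  using c_pos A_pos[of "i - 1"] by (simp add: sup_bound_def)

text \<open>Once \<open>i * q \<ge> 1\<close>, the kernel of \<open>(nn_conv H)\<^sup>i\<close> is bounded, so it maps \<open>L\<^sup>1\<close> to \<open>L\<^sup>\<infinity>\<close>.\<close>
lemma funpow_H_le: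
  assumes [measurable]: "w \<in> borel_measurable borel" and w: "\<And>s. s < 0 \<Longrightarrow> w s = 0"
    and i: "1 \<le> i" "1 \<le> real i * q" and T: "0 < T" "T \<le> 1" and s: "s \<le> T"
  shows "(nn_conv H ^^ i) w s \<le> ennreal (sup_bound T i) * (\<integral>\<^sup>+x. w x \<partial>lborel)"
proof -
  obtain k where k: "i = Suc k" using i by (cases i) auto
  have "nn_conv (nn_conv_pow H k) w s \<le> ennreal (sup_bound T i) * (\<integral>\<^sup>+x. w x \<partial>lborel)"
  proof (rule nn_conv_le_right)
    fix \<sigma>
    assume "w \<sigma> \<noteq> 0"
    then have "0 \<le> \<sigma>" using w by (cases "\<sigma> < 0") auto
    have "nn_conv_pow H k (s - \<sigma>)
        \<le> ennreal (c ^ (k + 1) * A k) * exp_powr_kernel \<nu>' (real (k + 1) * q - 1) (s - \<sigma>)"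
      by (rule nn_conv_pow_H_le)
    also have "\<dots> \<le> ennreal (c ^ (k + 1) * A k) * ennreal (exp \<nu>' * T powr (real (k + 1) * q - 1))"
      using \<open>0 \<le> \<sigma>\<close> s i T unfolding k by (intro mult_left_mono exp_powr_kernel_le) (auto simp: \<nu>'_def)
    also have "\<dots> = ennreal (sup_bound T i)"
      using c_pos A_pos[of k] unfolding k sup_bound_def by (simp add: ennreal_mult[symmetric] mult_ac)
    finally show "nn_conv_pow H k (s - \<sigma>) \<le> ennreal (sup_bound T i)" .
  qed measurable
  then show ?thesis unfolding k by (simp add: funpow_nn_conv_Suc del: funpow.simps)
qed

lemma funpow_H_eq_0:
  assumes "\<And>s. s < 0 \<Longrightarrow> w s = 0" "s < 0"
  shows "(nn_conv H ^^ i) w s = 0"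
  using assms(2)
proof (induction i arbitrary: s)
  case (Suc i)
  have "H (s - \<sigma>) * (nn_conv H ^^ i) w \<sigma> = 0" for \<sigma>
  proof (cases "\<sigma> < 0")
    case True
    then show ?thesis using Suc.IH by simp
  next
    case False
    then show ?thesis using Suc.prems H_eq_0[of "s - \<sigma>"] by simp
  qed
  then show ?case by (simp add: nn_conv_eq_0)
qed (use assms in simp)

lemma funpow_G_le_shift:
  assumes [measurable]: "v \<in> borel_measurable borel" and v: "\<And>s. s \<le> T \<Longrightarrow> v s \<le> B"
    and t: "t \<le> T + real j * \<delta>"
  shows "(nn_conv G ^^ j) v t \<le> (\<integral>\<^sup>+x. G x \<partial>lborel) ^ j * B"
  using t
proof (induction j arbitrary: t)
  case (Suc j)
  have "nn_conv G ((nn_conv G ^^ j) v) t \<le> (\<integral>\<^sup>+x. G x \<partial>lborel) * ((\<integral>\<^sup>+x. G x \<partial>lborel) ^ j * B)"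
  proof (rule nn_conv_le_left)
    fix s
    assume "G (t - s) \<noteq> 0"
    then have "\<not> t - s \<le> \<delta>" using G_eq_0 by blast
    then have "s \<le> T + real j * \<delta>" using Suc.prems by (simp add: algebra_simps)
    then show "(nn_conv G ^^ j) v s \<le> (\<integral>\<^sup>+x. G x \<partial>lborel) ^ j * B" by (rule Suc.IH)
  qed measurable
  then show ?case by (simp add: mult_ac)
qed (use v in simp)

lemma funpow_G_eq_0_shift:
  assumes v: "\<And>s. s < T \<Longrightarrow> v s = 0" and t: "t < T + real j * \<delta>"
  shows "(nn_conv G ^^ j) v t = 0"
  using t
proof (induction j arbitrary: t)
  case (Suc j)
  have "G (t - s) * (nn_conv G ^^ j) v s = 0" for s
  proof (cases "s < T + real j * \<delta>")
    case False
    then have "t - s \<le> \<delta>" using Suc.prems by (simp add: algebra_simps)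
    then show ?thesis by (simp add: G_eq_0)
  qed (simp add: Suc.IH)
  then show ?case by (simp add: nn_conv_eq_0)
qed (use v in simp)

definition "mixed_conv w j i = (nn_conv G ^^ j) ((nn_conv H ^^ i) w)"

text \<open>\<open>binomial_remainder w n\<close> collects the terms of \<open>(H + G)\<^sup>*\<^sup>n * w\<close> with at least one factor \<open>G\<close>;
  as \<open>\<bar>kb\<bar> \<le> H + G\<close>, it majorizes \<open>\<bar>V\<^sub>k\<^sup>n u - V\<^sub>h\<^sup>n u\<bar>\<close> for \<open>w = \<bar>u\<bar>\<close>.\<close>
definition "binomial_remainder w n t = (\<Sum>k<n. of_nat (n choose Suc k) * mixed_conv w (Suc k) (n - Suc k) t)"

lemma measurable_mixed_conv [measurable]:
  "w \<in> borel_measurable borel \<Longrightarrow> mixed_conv w j i \<in> borel_measurable borel"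
  unfolding mixed_conv_def by measurable

lemma measurable_binomial_remainder [measurable]:
  "w \<in> borel_measurable borel \<Longrightarrow> binomial_remainder w n \<in> borel_measurable borel"
  unfolding binomial_remainder_def[abs_def] by measurable

lemma binomial_remainder_Suc:
  assumes [measurable]: "w \<in> borel_measurable borel"
  shows "binomial_remainder w (Suc n) t
    = nn_conv H (binomial_remainder w n) t + nn_conv G (binomial_remainder w n) t
      + nn_conv G ((nn_conv H ^^ n) w) t"
proof -
  have H_step: "nn_conv H (mixed_conv w j i) = mixed_conv w j (Suc i)" for j i
    unfolding mixed_conv_def by (simp add: nn_conv_funpow_nn_conv)
  have "nn_conv H (binomial_remainder w n) t
      = (\<Sum>k<n. of_nat (n choose Suc k) * mixed_conv w (Suc k) (Suc n - Suc k) t)"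
    unfolding binomial_remainder_def nn_conv_sum_right[OF measurable_H measurable_mixed_conv[OF assms]]
    by (intro sum.cong refl) (simp add: H_step Suc_diff_Suc)
  also have "\<dots> = (\<Sum>k<Suc n. of_nat (n choose Suc k) * mixed_conv w (Suc k) (Suc n - Suc k) t)"
    by simp
  finally have H_part: "(\<Sum>k<Suc n. of_nat (n choose Suc k) * mixed_conv w (Suc k) (Suc n - Suc k) t)
      = nn_conv H (binomial_remainder w n) t" ..
  have G_part: "nn_conv G (binomial_remainder w n) t
      = (\<Sum>k<n. of_nat (n choose Suc k) * mixed_conv w (Suc (Suc k)) (n - Suc k) t)"
    unfolding binomial_remainder_def by (subst nn_conv_sum_right) (auto simp: mixed_conv_def)
  have "binomial_remainder w (Suc n) t
      = (\<Sum>k<Suc n. of_nat (n choose k) * mixed_conv w (Suc k) (Suc n - Suc k) t)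
        + (\<Sum>k<Suc n. of_nat (n choose Suc k) * mixed_conv w (Suc k) (Suc n - Suc k) t)"
    unfolding binomial_remainder_def by (simp add: distrib_right sum.distrib)
  also have "(\<Sum>k<Suc n. of_nat (n choose k) * mixed_conv w (Suc k) (Suc n - Suc k) t)
      = mixed_conv w (Suc 0) n t + nn_conv G (binomial_remainder w n) t"
    unfolding G_part by (subst sum.lessThan_Suc_shift) simp
  finally show ?thesis
    unfolding H_part by (simp add: mixed_conv_def ac_simps)
qed

lemma abs_volterra01_diff_le:
  assumes [measurable]: "a \<in> borel_measurable borel" "b \<in> borel_measurable borel"
    and fin: "nn_conv K (\<lambda>x. ennreal \<bar>a x\<bar>) t < \<infinity>" "nn_conv H (\<lambda>x. ennreal \<bar>b x\<bar>) t < \<infinity>"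
  shows "ennreal \<bar>volterra01 kb a t - volterra01 hb b t\<bar>
    \<le> nn_conv K (\<lambda>x. ennreal \<bar>a x - b x\<bar>) t + nn_conv G (\<lambda>x. ennreal \<bar>b x\<bar>) t"
proof (cases "t \<in> {0..1}")
  case True
  have "integrable lborel (\<lambda>s. kb (t - s) * a s)" "integrable lborel (\<lambda>s. hb (t - s) * b s)"
    using fin by (auto intro!: integrable_convolution_integrand simp: K_def[abs_def] abs_hb_eq_H)
  then have "volterra01 kb a t - volterra01 hb b t = (\<integral>s. kb (t - s) * a s - hb (t - s) * b s \<partial>lborel)"
    using True by (simp add: volterra01_def)
  then have "ennreal \<bar>volterra01 kb a t - volterra01 hb b t\<bar>
      \<le> (\<integral>\<^sup>+s. ennreal \<bar>kb (t - s) * a s - hb (t - s) * b s\<bar> \<partial>lborel)"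
    by (simp add: abs_integral_le_nn_integral_abs)
  also have "\<dots> \<le> (\<integral>\<^sup>+s. K (t - s) * ennreal \<bar>a s - b s\<bar> + G (t - s) * ennreal \<bar>b s\<bar> \<partial>lborel)"
  proof (intro nn_integral_mono)
    fix s
    have "kb (t - s) * a s - hb (t - s) * b s = kb (t - s) * (a s - b s) + (kb (t - s) - hb (t - s)) * b s"
      by (simp add: algebra_simps)
    then have "\<bar>kb (t - s) * a s - hb (t - s) * b s\<bar>
        \<le> \<bar>kb (t - s)\<bar> * \<bar>a s - b s\<bar> + \<bar>kb (t - s) - hb (t - s)\<bar> * \<bar>b s\<bar>"
      by (simp add: abs_mult[symmetric] abs_triangle_ineq)
    then show "ennreal \<bar>kb (t - s) * a s - hb (t - s) * b s\<bar>
        \<le> K (t - s) * ennreal \<bar>a s - b s\<bar> + G (t - s) * ennreal \<bar>b s\<bar>"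
      by (simp add: K_def G_def ennreal_mult[symmetric] ennreal_plus[symmetric] ennreal_leI del: ennreal_plus)
  qed
  also have "\<dots> = nn_conv K (\<lambda>x. ennreal \<bar>a x - b x\<bar>) t + nn_conv G (\<lambda>x. ennreal \<bar>b x\<bar>) t"
    by (simp add: nn_conv_def nn_integral_add)
  finally show ?thesis .
qed (simp add: volterra01_eq_0)

lemma AE_abs_funpow_volterra01_diff_le:
  assumes [measurable]: "u \<in> borel_measurable borel"
    and u: "(\<integral>\<^sup>+x. ennreal \<bar>u x\<bar> \<partial>lborel) < \<infinity>"
  shows "AE t in lborel. ennreal \<bar>(volterra01 kb ^^ n) u t - (volterra01 hb ^^ n) u t\<bar>
    \<le> binomial_remainder (\<lambda>x. ennreal \<bar>u x\<bar>) n t"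
proof (induction n)
  case 0
  then show ?case by (simp add: binomial_remainder_def)
next
  case (Suc n)
  let ?w = "\<lambda>x. ennreal \<bar>u x\<bar>"
  let ?a = "(volterra01 kb ^^ n) u" and ?b = "(volterra01 hb ^^ n) u"
  have a: "ennreal \<bar>?a x\<bar> \<le> (nn_conv K ^^ n) ?w x" for x
    using abs_funpow_volterra01_le[where f = kb and u = u and n = n and t = x] by (simp add: K_def[abs_def])
  have b: "ennreal \<bar>?b x\<bar> \<le> (nn_conv H ^^ n) ?w x" for x
    using abs_funpow_volterra01_le[where f = hb and u = u and n = n and t = x] by (simp add: abs_hb_eq_H)
  have "AE t in lborel. (nn_conv K ^^ Suc n) ?w t < \<infinity>"
    using kb_integrable u by (intro AE_funpow_nn_conv_finite) (auto simp: K_def)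
  moreover have "AE t in lborel. (nn_conv H ^^ Suc n) ?w t < \<infinity>"
    using hb_integrable u by (intro AE_funpow_nn_conv_finite) (auto simp: abs_hb_eq_H)
  ultimately show ?case
  proof eventually_elim
    case (elim t)
    have "ennreal \<bar>(volterra01 kb ^^ Suc n) u t - (volterra01 hb ^^ Suc n) u t\<bar>
        \<le> nn_conv K (\<lambda>x. ennreal \<bar>?a x - ?b x\<bar>) t + nn_conv G (\<lambda>x. ennreal \<bar>?b x\<bar>) t"
      using elim a b by (simp, intro abs_volterra01_diff_le)
        (auto intro: le_less_trans[OF nn_conv_mono])
    also have "\<dots> \<le> nn_conv (\<lambda>x. H x + G x) (binomial_remainder ?w n) t + nn_conv G ((nn_conv H ^^ n) ?w) t"
      by (intro add_mono nn_conv_mono_AE nn_conv_mono K_le_H_plus_G Suc b order_refl)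
    also have "\<dots> = binomial_remainder ?w (Suc n) t"
      by (simp add: nn_conv_add_left binomial_remainder_Suc)
    finally show ?case .
  qed
qed

definition "jmax = nat \<lfloor>1 / \<delta>\<rfloor>"

lemma one_lt_Suc_jmax_mult: "1 < real (Suc jmax) * \<delta>"
proof -
  have "1 / \<delta> < real (Suc jmax)"
    using \<delta>_pos unfolding jmax_def by linarith
  then show ?thesis using \<delta>_pos by (simp add: field_simps)
qed

text \<open>A term with \<open>j\<close> factors \<open>G\<close> vanishes on \<open>[0, 1]\<close> once \<open>j * \<delta> > 1\<close>; each remaining term
  has at least \<open>n - jmax\<close> factors \<open>H\<close>, evaluated at points \<open>\<le> 1 - \<delta>\<close>.\<close>
lemma binomial_remainder_le:
  assumes [measurable]: "w \<in> borel_measurable borel" and w: "\<And>s. s < 0 \<Longrightarrow> w s = 0"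
    and t: "t \<le> 1" and n: "jmax < n" "1 \<le> real (n - jmax) * q"
  shows "binomial_remainder w n t \<le> (\<Sum>k<jmax. of_nat (n choose Suc k) *
    ((\<integral>\<^sup>+x. G x \<partial>lborel) ^ Suc k * (ennreal (sup_bound (1 - \<delta>) (n - Suc k)) * (\<integral>\<^sup>+x. w x \<partial>lborel))))"
proof -
  have vanish: "mixed_conv w (Suc k) (n - Suc k) t = 0" if "jmax \<le> k" for k
    unfolding mixed_conv_def
  proof (rule funpow_G_eq_0_shift[where T = 0])
    show "(nn_conv H ^^ (n - Suc k)) w s = 0" if "s < 0" for s
      using funpow_H_eq_0[OF w that] .
    have "real (Suc jmax) * \<delta> \<le> real (Suc k) * \<delta>" using that \<delta>_pos by (intro mult_right_mono) auto
    then show "t < 0 + real (Suc k) * \<delta>" using one_lt_Suc_jmax_mult t by linarith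
  qed
  have bound: "mixed_conv w (Suc k) (n - Suc k) t
      \<le> (\<integral>\<^sup>+x. G x \<partial>lborel) ^ Suc k * (ennreal (sup_bound (1 - \<delta>) (n - Suc k)) * (\<integral>\<^sup>+x. w x \<partial>lborel))"
    if "k < jmax" for k
    unfolding mixed_conv_def
  proof (rule funpow_G_le_shift[where T = "1 - real (Suc k) * \<delta>"])
    fix s assume s: "s \<le> 1 - real (Suc k) * \<delta>"
    have "\<delta> \<le> real (Suc k) * \<delta>" using \<delta>_pos by simp
    then have "s \<le> 1 - \<delta>" using s by linarith
    moreover have "real (n - jmax) * q \<le> real (n - Suc k) * q" using that q_pos by (intro mult_right_mono) auto
    ultimately show "(nn_conv H ^^ (n - Suc k)) w s
        \<le> ennreal (sup_bound (1 - \<delta>) (n - Suc k)) * (\<integral>\<^sup>+x. w x \<partial>lborel)"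
      using that n \<delta>_pos \<delta>_lt_1 by (intro funpow_H_le w) auto
  qed (use t in auto)
  have "binomial_remainder w n t = (\<Sum>k<jmax. of_nat (n choose Suc k) * mixed_conv w (Suc k) (n - Suc k) t)
      + (\<Sum>k\<in>{jmax..<n}. of_nat (n choose Suc k) * mixed_conv w (Suc k) (n - Suc k) t)"
    unfolding binomial_remainder_def using n
    by (subst sum.union_disjoint[symmetric]) (auto intro!: sum.cong)
  also have "(\<Sum>k\<in>{jmax..<n}. of_nat (n choose Suc k) * mixed_conv w (Suc k) (n - Suc k) t) = 0"
    by (simp add: vanish)
  finally have "binomial_remainder w n t
      = (\<Sum>k<jmax. of_nat (n choose Suc k) * mixed_conv w (Suc k) (n - Suc k) t)"
    by simp
  also have "\<dots> \<le> (\<Sum>k<jmax. of_nat (n choose Suc k) *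
      ((\<integral>\<^sup>+x. G x \<partial>lborel) ^ Suc k * (ennreal (sup_bound (1 - \<delta>) (n - Suc k)) * (\<integral>\<^sup>+x. w x \<partial>lborel))))"
    by (intro sum_mono mult_left_mono bound) auto
  finally show ?thesis .
qed

definition "G_norm = enn2real (\<integral>\<^sup>+x. G x \<partial>lborel)"

lemma nn_integral_G_finite: "(\<integral>\<^sup>+x. G x \<partial>lborel) < \<infinity>"
proof -
  have "(\<integral>\<^sup>+x. G x \<partial>lborel) \<le> (\<integral>\<^sup>+x. ennreal \<bar>kb x\<bar> + ennreal \<bar>hb x\<bar> \<partial>lborel)"
    unfolding G_def
    by (intro nn_integral_mono) (simp add: ennreal_plus[symmetric] ennreal_leI abs_triangle_ineq4 del: ennreal_plus)
  also have "\<dots> = (\<integral>\<^sup>+x. ennreal \<bar>kb x\<bar> \<partial>lborel) + (\<integral>\<^sup>+x. ennreal \<bar>hb x\<bar> \<partial>lborel)"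
    by (rule nn_integral_add) auto
  also have "\<dots> < \<infinity>" using hb_integrable kb_integrable by (simp add: less_top)
  finally show ?thesis .
qed

definition "upper_sum n = (\<Sum>k<jmax. real (n choose Suc k) * (G_norm ^ Suc k * sup_bound (1 - \<delta>) (n - Suc k)))"

lemma upper_sum_nonneg: "0 \<le> upper_sum n"
  unfolding upper_sum_def G_norm_def using sup_bound_nonneg \<delta>_lt_1
  by (intro sum_nonneg mult_nonneg_nonneg) auto

lemma ennreal_upper_sum:
  "(\<Sum>k<jmax. of_nat (n choose Suc k) *
      ((\<integral>\<^sup>+x. G x \<partial>lborel) ^ Suc k * ennreal (sup_bound (1 - \<delta>) (n - Suc k)))) = ennreal (upper_sum n)"
proof -
  have G: "(\<integral>\<^sup>+x. G x \<partial>lborel) = ennreal G_norm"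
    using nn_integral_G_finite by (simp add: G_norm_def less_top[symmetric])
  have "0 \<le> G_norm" "\<And>k. 0 \<le> sup_bound (1 - \<delta>) k"
    using sup_bound_nonneg \<delta>_lt_1 by (auto simp: G_norm_def)
  then show ?thesis
    unfolding upper_sum_def G
    by (simp add: sum_ennreal[symmetric] ennreal_of_nat_eq_real_of_nat ennreal_mult ennreal_power del: sum_ennreal)
qed

lemma AE_abs_funpow_volterra01_diff_le_upper_sum:
  assumes [measurable]: "u \<in> borel_measurable borel" and u: "\<And>s. s < 0 \<Longrightarrow> u s = 0"
    and u_int: "(\<integral>\<^sup>+x. ennreal \<bar>u x\<bar> \<partial>lborel) \<le> 1"
    and n: "jmax < n" "1 \<le> real (n - jmax) * q"
  shows "AE t in lborel. t \<le> 1 \<longrightarrow> \<bar>(volterra01 kb ^^ n) u t - (volterra01 hb ^^ n) u t\<bar> \<le> upper_sum n"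
proof -
  let ?w = "\<lambda>x. ennreal \<bar>u x\<bar>"
  have "(\<integral>\<^sup>+x. ennreal \<bar>u x\<bar> \<partial>lborel) < \<infinity>"
    using u_int by (simp add: le_less_trans)
  from AE_abs_funpow_volterra01_diff_le[OF assms(1) this, of n]
  show ?thesis
  proof eventually_elim
    case (elim t)
    show ?case
    proof
      assume t: "t \<le> 1"
      have "ennreal \<bar>(volterra01 kb ^^ n) u t - (volterra01 hb ^^ n) u t\<bar> \<le> binomial_remainder ?w n t"
        by (rule elim)
      also have "\<dots> \<le> (\<Sum>k<jmax. of_nat (n choose Suc k) *
          ((\<integral>\<^sup>+x. G x \<partial>lborel) ^ Suc k * (ennreal (sup_bound (1 - \<delta>) (n - Suc k)) * (\<integral>\<^sup>+x. ?w x \<partial>lborel))))"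
        using u t n by (intro binomial_remainder_le) auto
      also have "\<dots> \<le> (\<Sum>k<jmax. of_nat (n choose Suc k) *
          ((\<integral>\<^sup>+x. G x \<partial>lborel) ^ Suc k * ennreal (sup_bound (1 - \<delta>) (n - Suc k))))"
        using u_int by (intro sum_mono mult_left_mono) (auto intro: mult_left_le)
      also have "\<dots> = ennreal (upper_sum n)"
        by (rule ennreal_upper_sum)
      finally have "ennreal \<bar>(volterra01 kb ^^ n) u t - (volterra01 hb ^^ n) u t\<bar> \<le> ennreal (upper_sum n)" .
      then show "\<bar>(volterra01 kb ^^ n) u t - (volterra01 hb ^^ n) u t\<bar> \<le> upper_sum n"
        using upper_sum_nonneg by (simp add: ennreal_le_iff)
    qed
  qed
qed

lemma abs_funpow_volterra01_hb_le:
  assumes [measurable]: "u \<in> borel_measurable borel" and u: "\<And>s. s < 0 \<Longrightarrow> u s = 0"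
    and u_int: "(\<integral>\<^sup>+x. ennreal \<bar>u x\<bar> \<partial>lborel) \<le> 1"
    and n: "1 \<le> n" "1 \<le> real n * q" and t: "t \<le> 1"
  shows "\<bar>(volterra01 hb ^^ n) u t\<bar> \<le> sup_bound 1 n"
proof -
  have "ennreal \<bar>(volterra01 hb ^^ n) u t\<bar> \<le> (nn_conv H ^^ n) (\<lambda>x. ennreal \<bar>u x\<bar>) t"
    using abs_funpow_volterra01_le[where f = hb] by (simp add: abs_hb_eq_H)
  also have "\<dots> \<le> ennreal (sup_bound 1 n) * (\<integral>\<^sup>+x. ennreal \<bar>u x\<bar> \<partial>lborel)"
    using u n t by (intro funpow_H_le) auto
  also have "\<dots> \<le> ennreal (sup_bound 1 n)"
    using u_int by (auto intro: mult_left_le)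
  finally show ?thesis
    using sup_bound_nonneg[of 1] by (simp add: ennreal_le_iff)
qed

lemma funpow_H_indicator_le: "(nn_conv H ^^ n) (indicator {0..1}) t \<le> (\<integral>\<^sup>+x. H x \<partial>lborel) ^ n"
proof (induction n arbitrary: t)
  case (Suc n)
  have "nn_conv H ((nn_conv H ^^ n) (indicator {0..1})) t \<le> (\<integral>\<^sup>+x. H x \<partial>lborel) * (\<integral>\<^sup>+x. H x \<partial>lborel) ^ n"
    by (rule nn_conv_le_left) (use Suc in auto)
  then show ?case by simp
qed (simp add: indicator_def)

lemma ennreal_funpow_volterra01_hb_indicator:
  "t \<le> 1 \<Longrightarrow> ennreal ((volterra01 hb ^^ n) (indicator {0..1}) t) = (nn_conv H ^^ n) (indicator {0..1}) t"
proof (induction n arbitrary: t)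
  case 0
  then show ?case by (simp add: indicator_def)
next
  case (Suc n)
  let ?b = "(volterra01 hb ^^ n) (indicator {0..1})"
  show ?case
  proof (cases "t < 0")
    case True
    have "(nn_conv H ^^ Suc n) (indicator {0..1}) t = 0"
      by (rule funpow_H_eq_0) (use True in auto)
    then show ?thesis
      using True by (simp add: volterra01_eq_0)
  next
    case False
    have b_nonneg: "0 \<le> ?b x" for x
      by (rule funpow_volterra01_nonneg) (simp_all add: hb_nonneg)
    have b_le: "ennreal (?b x) \<le> (nn_conv H ^^ n) (indicator {0..1}) x" for x
      using abs_funpow_volterra01_le[where f = hb and u = "indicator {0..1}" and n = n and t = x] b_nonneg[of x]
      by (simp add: abs_hb_eq_H ennreal_indicator)
    have "nn_conv (\<lambda>x. ennreal (hb x)) (\<lambda>x. ennreal (?b x)) t \<le> (nn_conv H ^^ Suc n) (indicator {0..1}) t"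
      using b_le by (simp add: nn_conv_mono H_def[symmetric])
    also have "\<dots> \<le> (\<integral>\<^sup>+x. H x \<partial>lborel) ^ Suc n"
      by (rule funpow_H_indicator_le)
    also have "\<dots> < \<infinity>"
      using hb_integrable by (simp add: abs_hb_eq_H ennreal_mult_less_top power_less_top_ennreal)
    finally have "ennreal (volterra01 hb ?b t) = nn_conv H (\<lambda>x. ennreal (?b x)) t"
      using False Suc.prems b_nonneg hb_nonneg
      by (subst ennreal_volterra01_eq_nn_conv) (auto simp: H_def[abs_def])
    also have "\<dots> = nn_conv H ((nn_conv H ^^ n) (indicator {0..1})) t"
    proof (rule nn_conv_cong_right)
      fix s assume "H (t - s) \<noteq> 0"
      then have "s \<le> 1" using H_eq_0[of "t - s"] Suc.prems by fastforce
      then show "ennreal (?b s) = (nn_conv H ^^ n) (indicator {0..1}) s" by (rule Suc.IH)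
    qed
    finally show ?thesis by simp
  qed
qed

lemma powr_le_nn_conv_pow_H:
  assumes y: "0 < y" "y \<le> 1"
  shows "ennreal (c ^ (i + 1) * A i * exp (- \<bar>\<mu>\<bar>) * y powr (real (i + 1) * q - 1)) \<le> nn_conv_pow H i y"
proof -
  let ?a = "real (i + 1) * q - 1"
  have "\<bar>\<mu> * y\<bar> \<le> \<bar>\<mu>\<bar>" using y by (simp add: abs_mult mult_left_le)
  then have "exp (- \<bar>\<mu>\<bar>) * y powr ?a \<le> exp (\<mu> * y) * y powr ?a"
    by (intro mult_right_mono) auto
  then have "c ^ (i + 1) * A i * exp (- \<bar>\<mu>\<bar>) * y powr ?a \<le> c ^ (i + 1) * A i * (exp (\<mu> * y) * y powr ?a)"
    using c_pos A_pos[of i] by (simp add: mult.assoc)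
  then have "ennreal (c ^ (i + 1) * A i * exp (- \<bar>\<mu>\<bar>) * y powr ?a)
      \<le> ennreal (c ^ (i + 1) * A i * (exp (\<mu> * y) * y powr ?a))"
    by (rule ennreal_leI)
  also have "\<dots> = ennreal (c ^ (i + 1) * A i) * exp_powr_kernel \<mu> ?a y"
    using y c_pos A_pos[of i] by (simp add: exp_powr_kernel_def ennreal_mult)
  also have "\<dots> \<le> nn_conv_pow H i y"
    using y by (intro kernel_le_nn_conv_pow_H) auto
  finally show ?thesis .
qed

lemma powr_le_funpow_H_indicator:
  assumes n: "1 \<le> n" and t: "t \<in> {0..1}"
  shows "ennreal (c ^ n * A (n - 1) * exp (- \<bar>\<mu>\<bar>) / (real n * q) * t powr (real n * q))
    \<le> (nn_conv H ^^ n) (indicator {0..1}) t"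
proof -
  obtain i where i: "n = Suc i" using n by (cases n) auto
  define C where "C = c ^ n * A i * exp (- \<bar>\<mu>\<bar>)"
  define a where "a = real n * q - 1"
  have a: "-1 < a" using q_pos n by (simp add: a_def)
  have C: "0 \<le> C" using c_pos A_pos[of i] by (simp add: C_def)
  have pointwise: "ennreal C * ennreal (indicator {0..t} s * (t - s) powr a)
      \<le> nn_conv_pow H i (t - s) * indicator {0..1} s" for s
  proof (cases "s \<in> {0..<t}")
    case True
    then have "ennreal C * ennreal (indicator {0..t} s * (t - s) powr a)
        = ennreal (c ^ (i + 1) * A i * exp (- \<bar>\<mu>\<bar>) * (t - s) powr (real (i + 1) * q - 1))"
      using C by (simp add: C_def a_def i ennreal_mult[symmetric])
    also have "\<dots> \<le> nn_conv_pow H i (t - s)"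
      using True t by (intro powr_le_nn_conv_pow_H) auto
    finally show ?thesis using True t by simp
  next
    case False
    then have "indicator {0..t} s * (t - s) powr a = 0" by (auto simp: indicator_def)
    then show ?thesis by (metis ennreal_0 mult_zero_right zero_le)
  qed
  have "ennreal (C / (real n * q) * t powr (real n * q))
      = ennreal C * ennreal (t powr (a + 1) / (a + 1))"
    using C by (simp add: a_def ennreal_mult'[symmetric])
  also have "\<dots> = ennreal C * (\<integral>\<^sup>+s. ennreal (indicator {0..t} s * (t - s) powr a) \<partial>lborel)"
    using nn_integral_reflect_powr[OF a, of t] t by simp
  also have "\<dots> \<le> (\<integral>\<^sup>+s. nn_conv_pow H i (t - s) * indicator {0..1} s \<partial>lborel)"
    by (subst nn_integral_cmult[symmetric]) (auto intro!: nn_integral_mono pointwise)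
  also have "\<dots> = (nn_conv H ^^ n) (indicator {0..1}) t"
    unfolding i funpow_nn_conv_Suc[OF measurable_H borel_measurable_indicator[OF borel_closed[OF closed_atLeastAtMost]]]
    by (simp add: nn_conv_def)
  finally show ?thesis by (simp add: C_def i)
qed

definition "lower_const n = c ^ n * A (n - 1) * exp (- \<bar>\<mu>\<bar>) / (real n * q * (real n * q + 1))"

lemma lower_const_pos: "1 \<le> n \<Longrightarrow> 0 < lower_const n"
  using c_pos A_pos q_pos by (simp add: lower_const_def add_pos_nonneg)

lemma lower_const_le_Lp_norm:
  assumes p: "1 \<le> p" and n: "1 \<le> n" "1 \<le> real n * q"
  shows "lower_const n \<le> Lp_norm p ((volterra01 hb ^^ n) (indicator {0..1}))"
proof -
  let ?b = "(volterra01 hb ^^ n) (indicator {0..1})"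
  define C where "C = c ^ n * A (n - 1) * exp (- \<bar>\<mu>\<bar>) / (real n * q)"
  have C: "0 \<le> C"
    using c_pos A_pos[of "n - 1"] q_pos by (auto simp: C_def intro!: divide_nonneg_nonneg mult_nonneg_nonneg)
  have "(\<integral>\<^sup>+x. ennreal \<bar>indicator {0..1::real} x\<bar> \<partial>lborel) \<le> 1"
    by (simp add: ennreal_indicator nn_integral_indicator)
  then have "in_Lp p ?b"
    using abs_funpow_volterra01_hb_le[where u = "indicator {0..1}"] n
    by (intro in_Lp_if_bounded[OF p]) auto
  have "ennreal (lower_const n) = ennreal C * (\<integral>\<^sup>+t. ennreal (indicator {0..1} t * t powr (real n * q)) \<partial>lborel)"
    using nn_integral_powr_interval[of "real n * q" 1] q_pos n C
    by (simp add: lower_const_def C_def ennreal_mult[symmetric] del: ennreal_mult)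
  also have "\<dots> = (\<integral>\<^sup>+t. ennreal (C * t powr (real n * q)) \<partial>L01)"
    using C by (simp add: nn_integral_L01 nn_integral_cmult[symmetric] ennreal_mult ennreal_indicator mult_ac)
  also have "\<dots> \<le> (\<integral>\<^sup>+t. ennreal \<bar>?b t\<bar> \<partial>L01)"
  proof (intro nn_integral_mono)
    fix t assume "t \<in> space L01"
    then have "ennreal (C * t powr (real n * q)) \<le> ennreal (?b t)"
      using powr_le_funpow_H_indicator[OF n(1)] ennreal_funpow_volterra01_hb_indicator[of t n]
      by (simp add: C_def)
    then show "ennreal (C * t powr (real n * q)) \<le> ennreal \<bar>?b t\<bar>"
      by (rule order.trans) (simp add: ennreal_leI)
  qed
  also have "\<dots> \<le> ennreal (Lp_norm p ?b)"
    by (rule nn_integral_abs_le_Lp_norm[OF p \<open>in_Lp p ?b\<close>])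
  finally show ?thesis
    using Lp_norm_nonneg by (simp add: ennreal_le_iff)
qed

text \<open>The growth of \<open>A\<close> compensates for the first \<open>j\<close> missing convolution factors at the price of
  \<open>(1 - \<delta>) powr (- n * q / 2)\<close>, which is why only half of the decay \<open>(1 - \<delta>) powr (n * q)\<close> survives.\<close>
lemma A_ratio_lower_bound:
  assumes j: "1 \<le> j"
  obtains \<kappa> where "0 < \<kappa>" "\<And>i. 1 \<le> i \<Longrightarrow> 1 \<le> real i * q \<Longrightarrow>
    A (i - 1) * ((1 - \<delta>) powr (real (i + j) * q / 2) * \<kappa> ^ j) \<le> A (i + j - 1)"
proof -
  define \<theta> where "\<theta> = (1 - \<delta>) powr (1 / (2 * real j))"
  have \<theta>: "0 < \<theta>" "\<theta> < 1"
    using \<delta>_pos \<delta>_lt_1 j powr_less_mono2[of "1 / (2 * real j)" "1 - \<delta>" 1] by (auto simp: \<theta>_def)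
  define \<kappa> where "\<kappa> = (1 - \<theta>) powr q / q"
  show ?thesis
  proof (rule that[of \<kappa>])
    show "0 < \<kappa>" using \<theta> q_pos by (simp add: \<kappa>_def)
    fix i assume i: "1 \<le> i" "1 \<le> real i * q"
    have "(\<theta> powr (real (i + j) * q)) ^ j = (1 - \<delta>) powr (real (i + j) * q / 2)"
      using \<delta>_lt_1 j by (simp add: \<theta>_def powr_powr powr_realpow[symmetric])
    moreover have "A (i - 1) * (\<theta> powr (real (i + j) * q) * \<kappa>) ^ j \<le> A (i - 1 + j)"
      unfolding A_def \<kappa>_def using i by (intro powr_conv_coeff_growth[OF q_pos \<theta>]) auto
    moreover have "i - 1 + j = i + j - 1" using i by simp
    ultimately show "A (i - 1) * ((1 - \<delta>) powr (real (i + j) * q / 2) * \<kappa> ^ j) \<le> A (i + j - 1)"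
      by (simp only: power_mult_distrib)
  qed
qed

lemma sup_bound_le_lower_const:
  assumes j: "1 \<le> j"
  obtains X where "\<And>i. 1 \<le> i \<Longrightarrow> 1 \<le> real i * q \<Longrightarrow> sup_bound (1 - \<delta>) i
    \<le> lower_const (i + j) * (X * (real (i + j) * q * (real (i + j) * q + 1)) * (1 - \<delta>) powr (real (i + j) * q / 2))"
proof -
  obtain \<kappa> where \<kappa>: "0 < \<kappa>" and A_ratio: "\<And>i. 1 \<le> i \<Longrightarrow> 1 \<le> real i * q \<Longrightarrow>
      A (i - 1) * ((1 - \<delta>) powr (real (i + j) * q / 2) * \<kappa> ^ j) \<le> A (i + j - 1)"
    using A_ratio_lower_bound[OF j] by blast
  define \<rho> where "\<rho> = 1 - \<delta>"
  have \<rho>: "0 < \<rho>" using \<delta>_lt_1 by (simp add: \<rho>_def)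
  show ?thesis
  proof (rule that[of "exp (\<nu>' + \<bar>\<mu>\<bar>) * \<rho> powr (- (real j * q + 1)) / (c ^ j * \<kappa> ^ j)"])
    fix i assume i: "1 \<le> i" "1 \<le> real i * q"
    define n where "n = i + j"
    define R where "R = \<rho> powr (real n * q / 2)"
    have R: "0 < R" using \<rho> by (simp add: R_def)
    have A: "A (i - 1) \<le> A (n - 1) / (R * \<kappa> ^ j)"
      using A_ratio[OF i] R \<kappa> by (simp add: pos_le_divide_eq R_def \<rho>_def n_def)
    have powr_split: "\<rho> powr (- (real j * q + 1)) * R * R = \<rho> powr (real i * q - 1)"
      using \<rho> by (simp add: R_def n_def powr_add[symmetric] algebra_simps)
    have field: "ci * (L / (R * kj)) * (e1 * e2) * (P * R * R) = ci * cj * L * e1 / D * (e2 * P / (cj * kj) * D * R)"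
      if "cj \<noteq> 0" "kj \<noteq> 0" "R \<noteq> 0" "D \<noteq> 0" for ci cj L e1 e2 P R kj D :: real
      using that by (simp add: field_simps)
    have nq: "0 < real n * q" using q_pos i by (simp add: n_def)
    then have "0 < real n * q + 1" by linarith
    with nq have D: "real n * q * (real n * q + 1) \<noteq> 0" by (metis mult_pos_pos less_irrefl)
    have "sup_bound \<rho> i \<le> c ^ i * (A (n - 1) / (R * \<kappa> ^ j)) * exp \<nu>' * \<rho> powr (real i * q - 1)"
      unfolding sup_bound_def using A c_pos by (intro mult_right_mono mult_left_mono) auto
    also have "\<dots> = c ^ i * (A (n - 1) / (R * \<kappa> ^ j)) * (exp (- \<bar>\<mu>\<bar>) * exp (\<nu>' + \<bar>\<mu>\<bar>))
        * (\<rho> powr (- (real j * q + 1)) * R * R)"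
      unfolding powr_split by (simp add: exp_add[symmetric])
    also have "\<dots> = c ^ i * c ^ j * A (n - 1) * exp (- \<bar>\<mu>\<bar>) / (real n * q * (real n * q + 1))
        * (exp (\<nu>' + \<bar>\<mu>\<bar>) * \<rho> powr (- (real j * q + 1)) / (c ^ j * \<kappa> ^ j) * (real n * q * (real n * q + 1)) * R)"
      using c_pos \<kappa> R D by (intro field) auto
    finally show "sup_bound (1 - \<delta>) i \<le> lower_const (i + j) * (exp (\<nu>' + \<bar>\<mu>\<bar>) * \<rho> powr (- (real j * q + 1))
        / (c ^ j * \<kappa> ^ j) * (real (i + j) * q * (real (i + j) * q + 1)) * (1 - \<delta>) powr (real (i + j) * q / 2))"
      unfolding lower_const_def by (simp only: \<rho>_def R_def n_def power_add mult.assoc)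
  qed
qed

lemma eventually_large_index: "eventually (\<lambda>n. j < n \<and> 1 \<le> real (n - j) * q) sequentially"
proof -
  have "j < n \<and> 1 \<le> real (n - j) * q" if "j + 1 + nat \<lceil>1 / q\<rceil> \<le> n" for n
  proof
    have "1 / q \<le> real (n - j)" using that by linarith
    then have "1 / q * q \<le> real (n - j) * q" by (rule mult_right_mono) (use q_pos in simp)
    moreover have "1 / q * q = 1" using q_pos by simp
    ultimately show "1 \<le> real (n - j) * q" by linarith
  qed (use that in simp)
  then show ?thesis unfolding eventually_sequentially by blast
qed

lemma binomial_sup_bound_over_lower_const_tendsto_0:
  assumes j: "1 \<le> j"
  shows "(\<lambda>n. real (n choose j) * sup_bound (1 - \<delta>) (n - j) / lower_const n) \<longlonglongrightarrow> 0"
proof -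
  obtain X where X: "\<And>i. 1 \<le> i \<Longrightarrow> 1 \<le> real i * q \<Longrightarrow> sup_bound (1 - \<delta>) i
    \<le> lower_const (i + j) * (X * (real (i + j) * q * (real (i + j) * q + 1)) * (1 - \<delta>) powr (real (i + j) * q / 2))"
    using sup_bound_le_lower_const[OF j] by blast
  define e where "e = - (q * ln (1 - \<delta>)) / 2"
  have e: "0 < e" using q_pos \<delta>_pos \<delta>_lt_1 by (simp add: e_def mult_pos_neg)
  have lim: "(\<lambda>n. real n ^ j * (X * (real n * q * (real n * q + 1)) * exp (- e * real n))) \<longlonglongrightarrow> 0"
    using q_pos e by real_asymp
  show ?thesis
  proof (rule tendsto_sandwich[OF _ _ tendsto_const lim])
    show "eventually (\<lambda>n. 0 \<le> real (n choose j) * sup_bound (1 - \<delta>) (n - j) / lower_const n) sequentially"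
      using eventually_large_index[of j]
      by eventually_elim (use sup_bound_nonneg \<delta>_lt_1 lower_const_pos in \<open>auto intro!: divide_nonneg_pos\<close>)
    show "eventually (\<lambda>n. real (n choose j) * sup_bound (1 - \<delta>) (n - j) / lower_const n
        \<le> real n ^ j * (X * (real n * q * (real n * q + 1)) * exp (- e * real n))) sequentially"
      using eventually_large_index[of j]
    proof eventually_elim
      case (elim n)
      define i where "i = n - j"
      have n: "n = i + j" and i: "1 \<le> i" "1 \<le> real i * q"
        using elim by (auto simp: i_def)
      have lower_pos: "0 < lower_const n" using lower_const_pos i n by simp
      have "(1 - \<delta>) powr (real n * q / 2) = exp (- e * real n)"
        using \<delta>_lt_1 by (simp add: powr_def e_def)
      then have "sup_bound (1 - \<delta>) i \<le> lower_const n * (X * (real n * q * (real n * q + 1)) * exp (- e * real n))"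
        using X[OF i] unfolding n[symmetric] by simp
      then have "sup_bound (1 - \<delta>) (n - j) / lower_const n \<le> X * (real n * q * (real n * q + 1)) * exp (- e * real n)"
        unfolding pos_divide_le_eq[OF lower_pos] i_def[symmetric] by (simp add: mult.commute)
      moreover have "real (n choose j) \<le> real n ^ j"
        using binomial_le_pow[of j n] elim by (simp flip: of_nat_power)
      ultimately show ?case
        using sup_bound_nonneg[of "1 - \<delta>" "n - j"] \<delta>_lt_1 lower_const_pos[of n] elim
        by (simp add: times_divide_eq_right[symmetric] del: times_divide_eq_right)
          (intro mult_mono; simp)
    qed
  qed
qed

lemma upper_sum_over_lower_const_tendsto_0: "(\<lambda>n. upper_sum n / lower_const n) \<longlonglongrightarrow> 0"
proof -
  have "upper_sum n / lower_const n
      = (\<Sum>k<jmax. G_norm ^ Suc k * (real (n choose Suc k) * sup_bound (1 - \<delta>) (n - Suc k) / lower_const n))" for n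
    by (simp add: upper_sum_def sum_divide_distrib mult_ac)
  then show ?thesis
    by (simp only:) (intro tendsto_null_sum tendsto_mult_right_zero binomial_sup_bound_over_lower_const_tendsto_0; simp)
qed

end

locale volterra_representatives = volterra_kernels +
  fixes h k :: "real \<Rightarrow> real"
  assumes h_ae: "AE x in lborel. x \<in> {0<..1} \<longrightarrow> h x = hb x"
    and k_ae: "AE x in lborel. x \<in> {0<..1} \<longrightarrow> k x = kb x"
begin

lemma Lp_norm_funpow_Volterra_diff_le:
  assumes p: "1 \<le> p" and u: "in_Lp p u" "Lp_norm p u \<le> 1"
    and n: "jmax < n" "1 \<le> real (n - jmax) * q"
  shows "Lp_norm p (\<lambda>t. (Volterra k ^^ n) u t - (Volterra h ^^ n) u t) \<le> upper_sum n"
proof -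
  obtain ub where ub: "ub \<in> borel_measurable borel" "\<And>x. x \<notin> {0..1} \<Longrightarrow> ub x = 0"
    "AE x in lborel. x \<in> {0..1} \<longrightarrow> u x = ub x" "(\<integral>\<^sup>+x. ennreal \<bar>ub x\<bar> \<partial>lborel) \<le> 1"
    using obtain_borel_representative_unit_ball[OF p u] by blast
  obtain n' where n': "n = Suc n'" using n by (cases n) auto
  have "Lp_norm p (\<lambda>t. (Volterra k ^^ n) u t - (Volterra h ^^ n) u t)
      = Lp_norm p (\<lambda>t. (volterra01 kb ^^ n) ub t - (volterra01 hb ^^ n) ub t)"
    unfolding n'
  proof (rule Lp_norm_cong)
    fix t :: real assume t: "t \<in> {0..1}"
    show "(Volterra k ^^ Suc n') u t - (Volterra h ^^ Suc n') u t
        = (volterra01 kb ^^ Suc n') ub t - (volterra01 hb ^^ Suc n') ub t"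
      using funpow_Volterra_eq_volterra01[OF measurable_kb ub(1) kb_outside k_ae ub(2,3) t]
        funpow_Volterra_eq_volterra01[OF measurable_hb ub(1) hb_outside h_ae ub(2,3) t]
      by simp
  qed
  also have "\<dots> \<le> upper_sum n"
  proof (rule Lp_norm_le_const[OF p upper_sum_nonneg])
    have "AE t in L01. t \<le> 1 \<longrightarrow> \<bar>(volterra01 kb ^^ n) ub t - (volterra01 hb ^^ n) ub t\<bar> \<le> upper_sum n"
      using ub(2,4) n by (intro AE_L01_if_AE_lborel AE_abs_funpow_volterra01_diff_le_upper_sum ub(1)) auto
    then show "AE t in L01. \<bar>(volterra01 kb ^^ n) ub t - (volterra01 hb ^^ n) ub t\<bar> \<le> upper_sum n"
      by (rule AE_mp) (auto intro!: AE_I2)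
  qed
  finally show ?thesis .
qed

lemma Lp_norm_funpow_Volterra_le:
  assumes p: "1 \<le> p" and u: "in_Lp p u" "Lp_norm p u \<le> 1"
    and n: "1 \<le> n" "1 \<le> real n * q"
  shows "Lp_norm p ((Volterra h ^^ n) u) \<le> sup_bound 1 n"
proof -
  obtain ub where ub: "ub \<in> borel_measurable borel" "\<And>x. x \<notin> {0..1} \<Longrightarrow> ub x = 0"
    "AE x in lborel. x \<in> {0..1} \<longrightarrow> u x = ub x" "(\<integral>\<^sup>+x. ennreal \<bar>ub x\<bar> \<partial>lborel) \<le> 1"
    using obtain_borel_representative_unit_ball[OF p u] by blast
  obtain n' where n': "n = Suc n'" using n by (cases n) auto
  have "Lp_norm p ((Volterra h ^^ n) u) = Lp_norm p ((volterra01 hb ^^ n) ub)"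
    unfolding n' by (intro Lp_norm_cong funpow_Volterra_eq_volterra01[OF measurable_hb ub(1) hb_outside h_ae ub(2,3)])
  also have "\<dots> \<le> sup_bound 1 n"
    using ub n sup_bound_nonneg[of 1 n]
    by (intro Lp_norm_le_const[OF p] AE_I2) (auto intro!: abs_funpow_volterra01_hb_le)
  finally show ?thesis .
qed

lemma lower_const_le_Lp_norm_funpow_Volterra_one:
  assumes p: "1 \<le> p" and n: "1 \<le> n" "1 \<le> real n * q"
  shows "lower_const n \<le> Lp_norm p ((Volterra h ^^ n) (\<lambda>_. 1))"
proof -
  obtain n' where n': "n = Suc n'" using n by (cases n) auto
  have "AE x in lborel. x \<in> {0..1} \<longrightarrow> 1 = indicator {0..1} x"
    by (intro AE_I2) simp
  then have "Lp_norm p ((Volterra h ^^ n) (\<lambda>_. 1)) = Lp_norm p ((volterra01 hb ^^ n) (indicator {0..1}))"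
    unfolding n' by (intro Lp_norm_cong funpow_Volterra_eq_volterra01[OF measurable_hb _ hb_outside h_ae]) auto
  then show ?thesis
    using lower_const_le_Lp_norm[OF p n] by simp
qed

theorem op_norm_ratio_tendsto_0:
  assumes p: "1 \<le> p"
  shows "(\<lambda>n. op_norm p (\<lambda>u t. (Volterra k ^^ n) u t - (Volterra h ^^ n) u t)
              / op_norm p (Volterra h ^^ n)) \<longlonglongrightarrow> 0"
proof (rule tendsto_sandwich[OF _ _ tendsto_const upper_sum_over_lower_const_tendsto_0])
  let ?D = "\<lambda>n u t. (Volterra k ^^ n) u t - (Volterra h ^^ n) u t"
  have zero_ball: "in_Lp p (\<lambda>_. 0)" "Lp_norm p (\<lambda>_. 0) \<le> 1"
    and one_ball: "in_Lp p (\<lambda>_. 1)" "Lp_norm p (\<lambda>_. 1) \<le> 1"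
    using const_in_unit_ball[OF p] by auto
  have bounds: "0 \<le> op_norm p (?D n)" "op_norm p (?D n) \<le> upper_sum n"
      "0 < lower_const n" "lower_const n \<le> op_norm p (Volterra h ^^ n)"
    if n: "jmax < n \<and> 1 \<le> real (n - jmax) * q" for n
  proof -
    have "real (n - jmax) * q \<le> real n * q" using q_pos by (intro mult_right_mono) auto
    then have n1: "1 \<le> n" "1 \<le> real n * q" using n by auto
    have D: "Lp_norm p (?D n u) \<le> upper_sum n" if "in_Lp p u" "Lp_norm p u \<le> 1" for u
      using Lp_norm_funpow_Volterra_diff_le[OF p that n[THEN conjunct1] n[THEN conjunct2]] .
    have V: "Lp_norm p ((Volterra h ^^ n) u) \<le> sup_bound 1 n" if "in_Lp p u" "Lp_norm p u \<le> 1" for u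
      using Lp_norm_funpow_Volterra_le[OF p that n1] .
    show "0 \<le> op_norm p (?D n)"
      using Lp_norm_nonneg[of p "?D n (\<lambda>_. 0)"] Lp_norm_le_op_norm[where T = "?D n", OF D zero_ball]
      by linarith
    show "op_norm p (?D n) \<le> upper_sum n"
      using op_norm_le[OF p D] .
    show "0 < lower_const n"
      using lower_const_pos n1 by simp
    show "lower_const n \<le> op_norm p (Volterra h ^^ n)"
      using lower_const_le_Lp_norm_funpow_Volterra_one[OF p n1]
        Lp_norm_le_op_norm[where T = "Volterra h ^^ n", OF V one_ball]
      by linarith
  qed
  show "eventually (\<lambda>n. 0 \<le> op_norm p (?D n) / op_norm p (Volterra h ^^ n)) sequentially"
    using eventually_large_index[of jmax]
  proof eventually_elim
    case (elim n)
    show ?case using bounds[OF elim] by simp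
  qed
  show "eventually (\<lambda>n. op_norm p (?D n) / op_norm p (Volterra h ^^ n) \<le> upper_sum n / lower_const n) sequentially"
    using eventually_large_index[of jmax]
  proof eventually_elim
    case (elim n)
    show ?case using frac_le[OF upper_sum_nonneg bounds(2-4)[OF elim]] .
  qed
qed

end

lemma obtain_volterra_representatives:
  fixes h k :: "real \<Rightarrow> real" and \<delta> c \<mu> \<nu> r :: real
  assumes hL1: "integrable L01 h" and kL1: "integrable L01 k"
    and \<delta>: "0 < \<delta>" "\<delta> < 1" and eq: "AE t in lebesgue_on {0..\<delta>}. h t = k t"
    and c: "c > 0" and r: "r > -1"
    and lower: "\<And>t. t \<in> {0<..1} \<Longrightarrow> c * t powr r * exp (\<mu> * t) \<le> h t"
    and upper: "\<And>t. t \<in> {0<..1} \<Longrightarrow> h t \<le> c * t powr r * exp (\<nu> * t)"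
  obtains hb kb where "volterra_representatives hb kb c \<mu> \<nu> r \<delta> h k"
proof -
  have "(\<lambda>t. c * t powr r * exp (\<mu> * t)) \<in> borel_measurable borel"
    "(\<lambda>t. c * t powr r * exp (\<nu> * t)) \<in> borel_measurable borel"
    by measurable
  moreover have "c * t powr r * exp (\<mu> * t) \<le> h t \<and> h t \<le> c * t powr r * exp (\<nu> * t)"
    if "t \<in> {0<..1}" for t
    using lower[OF that] upper[OF that] by simp
  ultimately obtain hb where hb [measurable]: "hb \<in> borel_measurable borel"
    and hb_outside: "\<And>x. x \<notin> {0<..1} \<Longrightarrow> hb x = 0"
    and h_ae: "AE x in lborel. x \<in> {0<..1} \<longrightarrow> h x = hb x"
    and hb_bounds: "\<And>x. x \<in> {0<..1} \<Longrightarrow> c * x powr r * exp (\<mu> * x) \<le> hb x \<and> hb x \<le> c * x powr r * exp (\<nu> * x)"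
    using obtain_clipped_borel_representative[OF borel_measurable_integrable[OF hL1]] by blast
  have "AE x in lborel. x \<in> {0..\<delta>} \<longrightarrow> h x = k x"
    using eq by (subst (asm) AE_restrict_space_iff) (auto simp: AE_completion_iff)
  then have "AE x in lborel. x \<in> {0<..\<delta>} \<longrightarrow> k x = hb x"
    using h_ae by eventually_elim (use \<delta> in auto)
  then obtain kb where [measurable]: "kb \<in> borel_measurable borel"
    and kb_outside: "\<And>x. x \<notin> {0<..1} \<Longrightarrow> kb x = 0" and kb_eq_hb: "\<And>x. x \<le> \<delta> \<Longrightarrow> kb x = hb x"
    and k_ae: "AE x in lborel. x \<in> {0<..1} \<longrightarrow> k x = kb x"
    using obtain_glued_borel_representative[OF borel_measurable_integrable[OF kL1] hb hb_outside]
      less_imp_le[OF \<delta>(1)] by blast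
  have "volterra_representatives hb kb c \<mu> \<nu> r \<delta> h k"
  proof unfold_locales
    show "c * x powr r * exp (\<mu> * x) \<le> hb x" "hb x \<le> c * x powr r * exp (\<nu> * x)"
      if "x \<in> {0<..1}" for x
      using hb_bounds[OF that] by simp_all
    show "(\<integral>\<^sup>+x. ennreal \<bar>hb x\<bar> \<partial>lborel) < \<infinity>"
      using nn_integral_abs_finite_if_integrable_L01[OF hL1 hb_outside h_ae] .
    show "(\<integral>\<^sup>+x. ennreal \<bar>kb x\<bar> \<partial>lborel) < \<infinity>"
      using nn_integral_abs_finite_if_integrable_L01[OF kL1 kb_outside k_ae] .
  qed (fact hb hb_outside kb_outside kb_eq_hb c r \<delta> h_ae k_ae \<open>kb \<in> borel_measurable borel\<close>)+
  then show ?thesis by (rule that)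
qed

theorem lemma4p2:
  fixes h k :: "real \<Rightarrow> real" and \<delta> c \<mu> \<nu> r :: real and p :: ereal
  assumes hL1: "integrable (lebesgue_on {0..1}) h"
    and kL1: "integrable (lebesgue_on {0..1}) k"
    and \<delta>: "0 < \<delta>" "\<delta> < 1"
    and eq: "AE t in lebesgue_on {0..\<delta>}. h t = k t"
    and c: "c > 0" and r: "r > -1"
    and lower: "\<And>t. t \<in> {0<..1} \<Longrightarrow> c * t powr r * exp (\<mu> * t) \<le> h t"
    and upper: "\<And>t. t \<in> {0<..1} \<Longrightarrow> h t \<le> c * t powr r * exp (\<nu> * t)"
    and p: "1 \<le> p"
  shows "(\<lambda>n. op_norm p (\<lambda>u t. (Volterra k ^^ n) u t - (Volterra h ^^ n) u t)
              / op_norm p (Volterra h ^^ n)) \<longlonglongrightarrow> 0"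
proof -
  obtain hb kb where "volterra_representatives hb kb c \<mu> \<nu> r \<delta> h k"
    using obtain_volterra_representatives[OF hL1 kL1 \<delta> eq c r lower upper] .
  then interpret volterra_representatives hb kb c \<mu> \<nu> r \<delta> h k .
  show ?thesis
    using op_norm_ratio_tendsto_0[OF p] .
qed

end
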